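(* Consider the perturbed federated algorithm described in the context, with $\beta\in(0,1)$, and a round $t$ whose step size satisfies $\gamma_t\le1/L$. Assume that the bounded variance, bounded stochastic gradient norm, $L$-smoothness and lower-bounded objective assumptions hold. Then $$\frac1E\sum_{k=0}^{E-1}\mathbb{E}\|\nabla F(\overline{\mathbf{w}}_{t,k})\|^2\le\frac2{\gamma_tE}\,\mathbb{E}\big[F(\overline{\mathbf{w}}_{t,0})-F(\overline{\mathbf{w}}_{t+1,0})\big]+A,$$ where $$A=\gamma_tL\sigma^2\sum_ip_i^2+4\gamma_t^2L^2E^2G^2\Big[4+(1-\beta)^2+\mathbb{1}_{t\ge1}\frac{8\gamma_{t-1}^2}{\gamma_t^2}\Big(1-\frac1\beta\Big)^2\Big].$$
   Context: Setting: there are $C$ clients with local objectives $F_i:\mathbb{R}^D\to\mathbb{R}$. Similarity weights $p_{in}\ge0$ are symmetric, satisfy $p_{ii}=0$, and $\sum_{i,n}p_{in}=1$. Let $p_i=\sum_np_{in}>0$ and $F=\sum_ip_iF_i$. Algorithm, with parameter $\beta$, $E\ge1$ local steps and step sizes $\gamma_t$, all clients participating: - $\mathbf{u}^i_0=\overline{\mathbf{w}}_{0,0}$. - In round $t$, $\mathbf{w}^i_{t,0}=\overline{\mathbf{w}}_{t,0}$. For $k=0,\dots,E-1$, $\widetilde{\mathbf{w}}^i_{t,k}=\beta\mathbf{w}^i_{t,k}+(1-\beta)\mathbf{u}^i_t$ and $\mathbf{w}^i_{t,k+1}=\mathbf{w}^i_{t,k}-\gamma_tg_i(\widetilde{\mathbf{w}}^i_{t,k})$,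 with stochastic gradients $g_i$ of $F_i$ sampled independently across clients and steps given the past. - $\overline{\mathbf{w}}_{t,k}=\sum_ip_i\mathbf{w}^i_{t,k}$ and $\overline{\mathbf{w}}_{t+1,0}=\overline{\mathbf{w}}_{t,E}$. - For $t\ge1$, $\mathbf{u}^i_t=\frac1{p_i}\sum_np_{in}\mathbf{w}^n_{t-1,E}$. Assumptions: - Unbiasedness: $\mathbb{E}\,g_i(\widetilde{\mathbf{w}}^i_{t,k})=\nabla F_i(\widetilde{\mathbf{w}}^i_{t,k})$. - Variance: $\mathbb{E}\|g_i-\nabla F_i\|^2\le\sigma^2$ at these points. - Bounded second moment: $\mathbb{E}\|g_i(\widetilde{\mathbf{w}}^i_{t,k})\|^2\le G^2$. - Each $\nabla F_i$ is $L$-Lipschitz. - $F$ is bounded below by $f_{\inf}$. $\mathbb{E}$ is total expectation. *)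

theory Defs
  imports "HOL-Probability.Probability"
begin

definition pw :: "('c::finite \<Rightarrow> 'c \<Rightarrow> real) \<Rightarrow> 'c \<Rightarrow> real" where
  "pw p i = (\<Sum>n\<in>UNIV. p i n)"

text \<open>Local steps of one client in one round. g is the client's stochastic gradient
  oracle (point, noise sample), ys k the noise sample used at local step k,
  w the round's starting point, u the client's anchor u^i_t.
  lstep ... k = w^i_{t,k}.\<close>
fun lstep :: "('a::real_vector \<Rightarrow> 'n \<Rightarrow> 'a) \<Rightarrow> real \<Rightarrow> real \<Rightarrow> 'a \<Rightarrow> 'a \<Rightarrow> (nat \<Rightarrow> 'n) \<Rightarrow> nat \<Rightarrow> 'a" where
  "lstep g \<beta> \<gamma> w u ys 0 = w"
| "lstep g \<beta> \<gamma> w u ys (Suc k) =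
     lstep g \<beta> \<gamma> w u ys k - \<gamma> *\<^sub>R g (\<beta> *\<^sub>R lstep g \<beta> \<gamma> w u ys k + (1 - \<beta>) *\<^sub>R u) (ys k)"

text \<open>State at the start of round t: (wbar_{t,0}, (u^i_t)_i), for a realisation ys i t k of
  all noise samples.\<close>
fun fed_state :: "('c::finite \<Rightarrow> 'c \<Rightarrow> real) \<Rightarrow> ('c \<Rightarrow> 'a::real_vector \<Rightarrow> 'n \<Rightarrow> 'a) \<Rightarrow> real \<Rightarrow> nat
    \<Rightarrow> (nat \<Rightarrow> real) \<Rightarrow> 'a \<Rightarrow> ('c \<Rightarrow> nat \<Rightarrow> nat \<Rightarrow> 'n) \<Rightarrow> nat \<Rightarrow> 'a \<times> ('c \<Rightarrow> 'a)" where
  "fed_state p g \<beta> E \<gamma> w0 ys 0 = (w0, (\<lambda>i. w0))"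
| "fed_state p g \<beta> E \<gamma> w0 ys (Suc t) =
     (let (w, u) = fed_state p g \<beta> E \<gamma> w0 ys t;
          fin = (\<lambda>i. lstep (g i) \<beta> (\<gamma> t) w (u i) (ys i t) E)
      in ((\<Sum>i\<in>UNIV. pw p i *\<^sub>R fin i), (\<lambda>i. (1 / pw p i) *\<^sub>R (\<Sum>n\<in>UNIV. p i n *\<^sub>R fin n))))"

definition fed_w :: "('c::finite \<Rightarrow> 'c \<Rightarrow> real) \<Rightarrow> ('c \<Rightarrow> 'a::real_vector \<Rightarrow> 'n \<Rightarrow> 'a) \<Rightarrow> real \<Rightarrow> nat
    \<Rightarrow> (nat \<Rightarrow> real) \<Rightarrow> 'a \<Rightarrow> ('c \<Rightarrow> nat \<Rightarrow> nat \<Rightarrow> 'n) \<Rightarrow> nat \<Rightarrow> nat \<Rightarrow> 'c \<Rightarrow> 'a" where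
  "fed_w p g \<beta> E \<gamma> w0 ys t k i =
     lstep (g i) \<beta> (\<gamma> t) (fst (fed_state p g \<beta> E \<gamma> w0 ys t)) (snd (fed_state p g \<beta> E \<gamma> w0 ys t) i) (ys i t) k"

definition fed_wt :: "('c::finite \<Rightarrow> 'c \<Rightarrow> real) \<Rightarrow> ('c \<Rightarrow> 'a::real_vector \<Rightarrow> 'n \<Rightarrow> 'a) \<Rightarrow> real \<Rightarrow> nat
    \<Rightarrow> (nat \<Rightarrow> real) \<Rightarrow> 'a \<Rightarrow> ('c \<Rightarrow> nat \<Rightarrow> nat \<Rightarrow> 'n) \<Rightarrow> nat \<Rightarrow> nat \<Rightarrow> 'c \<Rightarrow> 'a" where
  "fed_wt p g \<beta> E \<gamma> w0 ys t k i =
     \<beta> *\<^sub>R fed_w p g \<beta> E \<gamma> w0 ys t k i + (1 - \<beta>) *\<^sub>R snd (fed_state p g \<beta> E \<gamma> w0 ys t) i"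

definition fed_wbar :: "('c::finite \<Rightarrow> 'c \<Rightarrow> real) \<Rightarrow> ('c \<Rightarrow> 'a::real_vector \<Rightarrow> 'n \<Rightarrow> 'a) \<Rightarrow> real \<Rightarrow> nat
    \<Rightarrow> (nat \<Rightarrow> real) \<Rightarrow> 'a \<Rightarrow> ('c \<Rightarrow> nat \<Rightarrow> nat \<Rightarrow> 'n) \<Rightarrow> nat \<Rightarrow> nat \<Rightarrow> 'a" where
  "fed_wbar p g \<beta> E \<gamma> w0 ys t k = (\<Sum>i\<in>UNIV. pw p i *\<^sub>R fed_w p g \<beta> E \<gamma> w0 ys t k i)"

end

theory Submission
  imports Defs
begin

text \<open>For each local step k the descent lemma for the L-smooth objective F, taken at wbar_{t,k}
  with step -\<gamma>_t sum_i p_i g_i, and the polarization identity for the inner product of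
  \<nabla>F(wbar_{t,k}) with sum_i p_i \<nabla>F_i(wtilde^i_{t,k}) bound the expected decrease of F from below
  by \<gamma>_t/2 times the mean of |\<nabla>F(wbar_{t,k})|^2, minus two error terms. The gradient noise of
  step k is independent of everything drawn before it, hence orthogonal to all earlier
  square-integrable quantities and across clients; this leaves the variance term
  L \<gamma>_t^2 \<sigma>^2 sum_i p_i^2 / 2. The other error is L^2 times the mean drift |wbar_{t,k} - wtilde^i_{t,k}|^2,
  which the second-moment bound G controls through the at most E steps of round t and, via the
  anchor u^i_t, of round t-1. Summing over k telescopes.\<close>

section \<open>Elementary inequalities\<close>

lemma power2_norm_sum_scaleR_le:
  fixes v :: "'i \<Rightarrow> 'a::real_inner" and q :: "'i \<Rightarrow> real"
  assumes "finite S" and q: "\<And>i. i \<in> S \<Longrightarrow> 0 \<le> q i" and q_sum: "sum q S = 1"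
  shows "(norm (\<Sum>i\<in>S. q i *\<^sub>R v i))\<^sup>2 \<le> (\<Sum>i\<in>S. q i * (norm (v i))\<^sup>2)"
proof -
  let ?m = "\<Sum>i\<in>S. q i * norm (v i)"
  have "norm (\<Sum>i\<in>S. q i *\<^sub>R v i) \<le> (\<Sum>i\<in>S. norm (q i *\<^sub>R v i))" by (rule norm_sum)
  also have "\<dots> = ?m" using q by (intro sum.cong) auto
  finally have "(norm (\<Sum>i\<in>S. q i *\<^sub>R v i))\<^sup>2 \<le> ?m\<^sup>2" by (intro power_mono) auto
  moreover have "0 \<le> (\<Sum>i\<in>S. q i * (norm (v i) - ?m)\<^sup>2)" using q by (intro sum_nonneg) auto
  moreover have "(\<Sum>i\<in>S. q i * (norm (v i) - ?m)\<^sup>2)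
      = (\<Sum>i\<in>S. q i * (norm (v i))\<^sup>2 - 2 * ?m * (q i * norm (v i)) + ?m\<^sup>2 * q i)"
    by (intro sum.cong refl) (simp add: power2_eq_square algebra_simps)
  moreover have "\<dots> = (\<Sum>i\<in>S. q i * (norm (v i))\<^sup>2) - 2 * ?m * ?m + ?m\<^sup>2 * sum q S"
    by (simp only: sum.distrib sum_subtractf sum_distrib_left[symmetric])
  ultimately show ?thesis using q_sum by (simp add: power2_eq_square)
qed

lemma power2_norm_sum_le:
  fixes v :: "nat \<Rightarrow> 'a::real_inner"
  shows "(norm (\<Sum>j<k. v j))\<^sup>2 \<le> real k * (\<Sum>j<k. (norm (v j))\<^sup>2)"
proof (cases "k = 0")
  case False
  have "(norm ((1 / real k) *\<^sub>R (\<Sum>j<k. v j)))\<^sup>2 \<le> (\<Sum>j<k. (1 / real k) * (norm (v j))\<^sup>2)"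
    unfolding scaleR_sum_right using False by (intro power2_norm_sum_scaleR_le) auto
  then show ?thesis
    using False by (simp add: power_mult_distrib power_divide field_simps sum_divide_distrib[symmetric])
      (simp add: power2_eq_square mult.assoc)
qed simp

lemma power2_norm_add_le:
  fixes x y :: "'a::real_normed_vector"
  shows "(norm (x + y))\<^sup>2 \<le> 2 * ((norm x)\<^sup>2 + (norm y)\<^sup>2)"
proof -
  have "(norm (x + y))\<^sup>2 \<le> (norm x + norm y)\<^sup>2"
    by (intro power_mono norm_triangle_ineq) auto
  also have "\<dots> \<le> 2 * ((norm x)\<^sup>2 + (norm y)\<^sup>2)"
    using zero_le_square[of "norm x - norm y"] by (simp add: power2_eq_square algebra_simps)
  finally show ?thesis .
qed

lemma power2_norm_add3_le:
  fixes x y z :: "'a::real_normed_vector"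
  shows "(norm (x + y + z))\<^sup>2 \<le> 3 * ((norm x)\<^sup>2 + (norm y)\<^sup>2 + (norm z)\<^sup>2)"
proof -
  have "(norm (x + y + z))\<^sup>2 \<le> (norm x + norm y + norm z)\<^sup>2"
    by (intro power_mono) (auto intro: order_trans[OF norm_triangle_ineq] add_mono)
  also have "\<dots> \<le> 3 * ((norm x)\<^sup>2 + (norm y)\<^sup>2 + (norm z)\<^sup>2)"
    using zero_le_square[of "norm x - norm y"] zero_le_square[of "norm y - norm z"]
      zero_le_square[of "norm x - norm z"]
    by (simp add: power2_eq_square algebra_simps)
  finally show ?thesis .
qed

lemma lipschitz_gradient_taylor_bound:
  fixes f :: "'a::real_inner \<Rightarrow> real"
  assumes deriv: "\<And>x. (f has_derivative (\<lambda>h. gf x \<bullet> h)) (at x)"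
    and lip: "\<And>x y. norm (gf x - gf y) \<le> L * norm (x - y)"
  shows "\<bar>f y - f x - gf x \<bullet> (y - x)\<bar> \<le> L / 2 * (norm (y - x))\<^sup>2"
proof -
  define d where "d = y - x"
  define \<phi> where "\<phi> s = f (x + s *\<^sub>R d) - s * (gf x \<bullet> d)" for s :: real
  have \<phi>_deriv: "(\<phi> has_real_derivative ((gf (x + s *\<^sub>R d) - gf x) \<bullet> d)) (at s)" for s
  proof -
    have "((\<lambda>s. x + s *\<^sub>R d) has_derivative (\<lambda>h. h *\<^sub>R d)) (at s)"
      by (auto intro!: derivative_eq_intros)
    from has_derivative_compose[OF this deriv]
    have "(\<phi> has_derivative (\<lambda>h. gf (x + s *\<^sub>R d) \<bullet> (h *\<^sub>R d) - h * (gf x \<bullet> d))) (at s)"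
      unfolding \<phi>_def[abs_def] by (auto intro!: derivative_eq_intros)
    then show ?thesis
      unfolding has_field_derivative_def
      by (rule has_derivative_eq_rhs) (simp add: fun_eq_iff inner_diff_left algebra_simps)
  qed
  have slope: "\<bar>(gf (x + s *\<^sub>R d) - gf x) \<bullet> d\<bar> \<le> L * s * (norm d)\<^sup>2" if "0 \<le> s" for s
  proof -
    have "\<bar>(gf (x + s *\<^sub>R d) - gf x) \<bullet> d\<bar> \<le> norm (gf (x + s *\<^sub>R d) - gf x) * norm d"
      by (rule Cauchy_Schwarz_ineq2)
    also have "\<dots> \<le> (L * norm (s *\<^sub>R d)) * norm d"
      using lip[of "x + s *\<^sub>R d" x] by (intro mult_right_mono) auto
    finally show ?thesis using that by (simp add: power2_eq_square)
  qed
  define \<psi>\<^sub>1 where "\<psi>\<^sub>1 s = \<phi> s - L / 2 * s\<^sup>2 * (norm d)\<^sup>2" for s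
  define \<psi>\<^sub>2 where "\<psi>\<^sub>2 s = \<phi> s + L / 2 * s\<^sup>2 * (norm d)\<^sup>2" for s
  have upper: "\<psi>\<^sub>1 1 \<le> \<psi>\<^sub>1 0"
  proof (rule DERIV_nonpos_imp_nonincreasing[of 0 1])
    fix s :: real assume "0 \<le> s" "s \<le> 1"
    moreover have "(\<psi>\<^sub>1 has_real_derivative ((gf (x + s *\<^sub>R d) - gf x) \<bullet> d - L * s * (norm d)\<^sup>2)) (at s)"
      unfolding \<psi>\<^sub>1_def by (rule derivative_eq_intros \<phi>_deriv refl | simp)+
    ultimately show "\<exists>y. (\<psi>\<^sub>1 has_real_derivative y) (at s) \<and> y \<le> 0"
      using slope by force
  qed simp
  have lower: "\<psi>\<^sub>2 0 \<le> \<psi>\<^sub>2 1"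
  proof (rule DERIV_nonneg_imp_nondecreasing[of 0 1])
    fix s :: real assume "0 \<le> s" "s \<le> 1"
    moreover have "(\<psi>\<^sub>2 has_real_derivative ((gf (x + s *\<^sub>R d) - gf x) \<bullet> d + L * s * (norm d)\<^sup>2)) (at s)"
      unfolding \<psi>\<^sub>2_def by (rule derivative_eq_intros \<phi>_deriv refl | simp)+
    ultimately show "\<exists>y. (\<psi>\<^sub>2 has_real_derivative y) (at s) \<and> y \<ge> 0"
      using slope by force
  qed simp
  from upper lower show ?thesis
    unfolding \<psi>\<^sub>1_def \<psi>\<^sub>2_def \<phi>_def d_def by (simp add: inner_diff_right split: abs_split)
qed

lemma weighted_descent:
  fixes F :: "'i \<Rightarrow> 'a::real_inner \<Rightarrow> real"
  assumes deriv: "\<And>i x. (F i has_derivative (\<lambda>h. gF i x \<bullet> h)) (at x)"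
    and lip: "\<And>i x y. norm (gF i x - gF i y) \<le> L * norm (x - y)"
    and q: "\<And>i. i \<in> I \<Longrightarrow> 0 \<le> q i" and q_sum: "sum q I = 1"
  shows "(\<Sum>i\<in>I. q i * F i (x - c *\<^sub>R v))
    \<le> (\<Sum>i\<in>I. q i * F i x) - c * ((\<Sum>i\<in>I. q i *\<^sub>R gF i x) \<bullet> v) + L * c\<^sup>2 / 2 * (norm v)\<^sup>2"
proof -
  have "F i (x - c *\<^sub>R v) \<le> F i x - c * (gF i x \<bullet> v) + L * c\<^sup>2 / 2 * (norm v)\<^sup>2" for i
    using abs_le_D1[OF lipschitz_gradient_taylor_bound[OF deriv lip, of i "x - c *\<^sub>R v" x]]
    by (simp add: power_mult_distrib)
  then have "(\<Sum>i\<in>I. q i * F i (x - c *\<^sub>R v))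
      \<le> (\<Sum>i\<in>I. q i * (F i x - c * (gF i x \<bullet> v) + L * c\<^sup>2 / 2 * (norm v)\<^sup>2))"
    using q by (intro sum_mono mult_left_mono) auto
  also have "\<dots> = (\<Sum>i\<in>I. q i * F i x) - c * (\<Sum>i\<in>I. q i * (gF i x \<bullet> v))
      + (\<Sum>i\<in>I. q i) * (L * c\<^sup>2 / 2 * (norm v)\<^sup>2)"
    by (simp add: algebra_simps sum.distrib sum_subtractf sum_distrib_left sum_distrib_right)
  also have "\<dots> = (\<Sum>i\<in>I. q i * F i x) - c * ((\<Sum>i\<in>I. q i *\<^sub>R gF i x) \<bullet> v) + L * c\<^sup>2 / 2 * (norm v)\<^sup>2"
    using q_sum by (simp add: inner_sum_left)
  finally show ?thesis .
qed

section \<open>Square-integrable random variables\<close>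

definition square_integrable :: "'a measure \<Rightarrow> ('a \<Rightarrow> 'b::real_normed_vector) \<Rightarrow> bool" where
  "square_integrable M f \<longleftrightarrow> f \<in> borel_measurable M \<and> integrable M (\<lambda>x. (norm (f x))\<^sup>2)"

lemma square_integrableD:
  "square_integrable M f \<Longrightarrow> f \<in> borel_measurable M"
  "square_integrable M f \<Longrightarrow> integrable M (\<lambda>x. (norm (f x))\<^sup>2)"
  by (simp_all add: square_integrable_def)

lemma (in finite_measure) square_integrable_const: "square_integrable M (\<lambda>_. c)"
  by (simp add: square_integrable_def)

lemma square_integrable_add:
  fixes f g :: "'a \<Rightarrow> 'b::{real_normed_vector, second_countable_topology}"
  assumes f: "square_integrable M f" and g: "square_integrable M g"
  shows "square_integrable M (\<lambda>x. f x + g x)"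
proof -
  have "integrable M (\<lambda>x. (norm (f x + g x))\<^sup>2)"
  proof (rule Bochner_Integration.integrable_bound)
    show "integrable M (\<lambda>x. 2 * ((norm (f x))\<^sup>2 + (norm (g x))\<^sup>2))"
      using f g by (simp add: square_integrable_def)
    show "(\<lambda>x. (norm (f x + g x))\<^sup>2) \<in> borel_measurable M"
      using square_integrableD(1)[OF f] square_integrableD(1)[OF g] by measurable
    show "AE x in M. norm ((norm (f x + g x))\<^sup>2) \<le> norm (2 * ((norm (f x))\<^sup>2 + (norm (g x))\<^sup>2))"
      using power2_norm_add_le by (intro AE_I2) simp
  qed
  with f g show ?thesis by (auto simp: square_integrable_def)
qed

lemma square_integrable_scaleR:
  fixes f :: "'a \<Rightarrow> 'b::{real_normed_vector, second_countable_topology}"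
  shows "square_integrable M f \<Longrightarrow> square_integrable M (\<lambda>x. c *\<^sub>R f x)"
  by (auto simp: square_integrable_def power_mult_distrib)

lemma square_integrable_diff:
  fixes f g :: "'a \<Rightarrow> 'b::{real_normed_vector, second_countable_topology}"
  shows "square_integrable M f \<Longrightarrow> square_integrable M g \<Longrightarrow> square_integrable M (\<lambda>x. f x - g x)"
  using square_integrable_add[of M f "\<lambda>x. (-1) *\<^sub>R g x"] square_integrable_scaleR[of M g "-1"]
  by simp

lemma (in finite_measure) square_integrable_sum:
  fixes f :: "'i \<Rightarrow> 'a \<Rightarrow> 'b::{real_normed_vector, second_countable_topology}"
  shows "(\<And>i. i \<in> I \<Longrightarrow> square_integrable M (f i)) \<Longrightarrow> square_integrable M (\<lambda>x. \<Sum>i\<in>I. f i x)"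
  by (induction I rule: infinite_finite_induct)
    (simp_all add: square_integrable_const square_integrable_add)

lemma integrable_inner_square_integrable:
  fixes f g :: "'a \<Rightarrow> 'b::{real_inner, second_countable_topology}"
  assumes f: "square_integrable M f" and g: "square_integrable M g"
  shows "integrable M (\<lambda>x. f x \<bullet> g x)"
proof (rule Bochner_Integration.integrable_bound)
  show "integrable M (\<lambda>x. (norm (f x))\<^sup>2 + (norm (g x))\<^sup>2)"
    using f g by (simp add: square_integrable_def)
  show "(\<lambda>x. f x \<bullet> g x) \<in> borel_measurable M"
    using square_integrableD(1)[OF f] square_integrableD(1)[OF g] by measurable
  show "AE x in M. norm (f x \<bullet> g x) \<le> norm ((norm (f x))\<^sup>2 + (norm (g x))\<^sup>2)"
  proof (intro AE_I2)
    fix x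
    have "\<bar>f x \<bullet> g x\<bar> \<le> norm (f x) * norm (g x)" by (rule Cauchy_Schwarz_ineq2)
    also have "\<dots> \<le> (norm (f x))\<^sup>2 + (norm (g x))\<^sup>2"
      using sum_squares_bound[of "norm (f x)" "norm (g x)"]
        mult_nonneg_nonneg[OF norm_ge_zero norm_ge_zero, of "f x" "g x"] by linarith
    finally show "norm (f x \<bullet> g x) \<le> norm ((norm (f x))\<^sup>2 + (norm (g x))\<^sup>2)" by simp
  qed
qed

lemma (in finite_measure) integrable_square_integrable:
  fixes f :: "'a \<Rightarrow> 'b::{banach, second_countable_topology}"
  assumes f: "square_integrable M f"
  shows "integrable M f"
proof (rule Bochner_Integration.integrable_bound)
  show "integrable M (\<lambda>x. 1 + (norm (f x))\<^sup>2)" using f by (simp add: square_integrable_def)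
  show "f \<in> borel_measurable M" using f by (simp add: square_integrable_def)
  show "AE x in M. norm (f x) \<le> norm (1 + (norm (f x))\<^sup>2)"
  proof (intro AE_I2)
    fix x
    have "2 * norm (f x) \<le> 1 + (norm (f x))\<^sup>2"
      using sum_squares_bound[of "norm (f x)" 1] by (simp add: add.commute)
    then have "norm (f x) \<le> 1 + (norm (f x))\<^sup>2"
      using norm_ge_zero[of "f x"] by linarith
    then show "norm (f x) \<le> norm (1 + (norm (f x))\<^sup>2)" by simp
  qed
qed

lemma (in finite_measure) square_integrable_lipschitz_comp:
  fixes \<phi> :: "'b::{real_normed_vector, second_countable_topology} \<Rightarrow> 'c::{real_normed_vector, second_countable_topology}"
  assumes lip: "C-lipschitz_on UNIV \<phi>" and f: "square_integrable M f"
  shows "square_integrable M (\<lambda>x. \<phi> (f x))"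
proof -
  have meas: "(\<lambda>x. \<phi> (f x)) \<in> borel_measurable M"
    using measurable_compose[OF square_integrableD(1)[OF f]
        borel_measurable_continuous_onI[OF lipschitz_on_continuous_on[OF lip]]]
    by (simp add: comp_def)
  have bound: "(norm (\<phi> y))\<^sup>2 \<le> 2 * ((norm (\<phi> 0))\<^sup>2 + C\<^sup>2 * (norm y)\<^sup>2)" for y
  proof -
    have "(norm (\<phi> y))\<^sup>2 \<le> 2 * ((norm (\<phi> 0))\<^sup>2 + (norm (\<phi> y - \<phi> 0))\<^sup>2)"
      using power2_norm_add_le[of "\<phi> 0" "\<phi> y - \<phi> 0"] by simp
    moreover have "norm (\<phi> y - \<phi> 0) \<le> C * norm y"
      using lipschitz_onD[OF lip, of y 0] by (simp add: dist_norm)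
    then have "(norm (\<phi> y - \<phi> 0))\<^sup>2 \<le> C\<^sup>2 * (norm y)\<^sup>2"
      by (metis norm_ge_zero power_mono power_mult_distrib)
    ultimately show ?thesis by argo
  qed
  have "integrable M (\<lambda>x. (norm (\<phi> (f x)))\<^sup>2)"
  proof (rule Bochner_Integration.integrable_bound)
    show "integrable M (\<lambda>x. 2 * ((norm (\<phi> 0))\<^sup>2 + C\<^sup>2 * (norm (f x))\<^sup>2))"
      using square_integrableD(2)[OF f] by simp
    show "(\<lambda>x. (norm (\<phi> (f x)))\<^sup>2) \<in> borel_measurable M"
      using meas by measurable
    show "AE x in M. norm ((norm (\<phi> (f x)))\<^sup>2) \<le> norm (2 * ((norm (\<phi> 0))\<^sup>2 + C\<^sup>2 * (norm (f x))\<^sup>2))"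
      using bound by (intro AE_I2) simp
  qed
  with meas show ?thesis by (simp add: square_integrable_def)
qed

lemma (in finite_measure) integrable_smooth_comp:
  fixes F :: "'b::{real_inner, banach, second_countable_topology} \<Rightarrow> real"
  assumes deriv: "\<And>x. (F has_derivative (\<lambda>h. gF x \<bullet> h)) (at x)"
    and lip: "\<And>x y. norm (gF x - gF y) \<le> C * norm (x - y)"
    and f: "square_integrable M f"
  shows "integrable M (\<lambda>x. F (f x))"
proof (rule Bochner_Integration.integrable_bound)
  have "continuous_on UNIV F"
    using deriv by (intro continuous_at_imp_continuous_on) (auto intro: has_derivative_continuous)
  from measurable_compose[OF square_integrableD(1)[OF f] borel_measurable_continuous_onI[OF this]]
  show "(\<lambda>x. F (f x)) \<in> borel_measurable M" by (simp add: comp_def)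
  show "integrable M (\<lambda>x. \<bar>F 0\<bar> + norm (gF 0) * norm (f x) + \<bar>C\<bar> / 2 * (norm (f x))\<^sup>2)"
    using integrable_square_integrable[OF f] square_integrableD(2)[OF f] by simp
  show "AE x in M. norm (F (f x)) \<le> norm (\<bar>F 0\<bar> + norm (gF 0) * norm (f x) + \<bar>C\<bar> / 2 * (norm (f x))\<^sup>2)"
  proof (intro AE_I2)
    fix x
    have "\<bar>F (f x) - F 0 - gF 0 \<bullet> f x\<bar> \<le> C / 2 * (norm (f x))\<^sup>2"
      using lipschitz_gradient_taylor_bound[OF deriv lip, of "f x" 0] by simp
    moreover have "\<bar>gF 0 \<bullet> f x\<bar> \<le> norm (gF 0) * norm (f x)"
      by (rule Cauchy_Schwarz_ineq2)
    moreover have "C / 2 * (norm (f x))\<^sup>2 \<le> \<bar>C\<bar> / 2 * (norm (f x))\<^sup>2"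
      by (intro mult_right_mono) auto
    ultimately have "\<bar>F (f x)\<bar> \<le> \<bar>F 0\<bar> + norm (gF 0) * norm (f x) + \<bar>C\<bar> / 2 * (norm (f x))\<^sup>2"
      by linarith
    then show "norm (F (f x)) \<le> norm (\<bar>F 0\<bar> + norm (gF 0) * norm (f x) + \<bar>C\<bar> / 2 * (norm (f x))\<^sup>2)"
      by simp
  qed
qed

lemma integrable_integral_le_of_nn_integral_le:
  fixes f :: "'a \<Rightarrow> real"
  assumes "f \<in> borel_measurable M" and nonneg: "\<And>x. 0 \<le> f x"
    and bound: "(\<integral>\<^sup>+x. ennreal (f x) \<partial>M) \<le> ennreal c" and "0 \<le> c"
  shows "integrable M f" "integral\<^sup>L M f \<le> c"
proof -
  show int: "integrable M f"
    using assms by (intro integrableI_nonneg) (auto simp: top_unique intro: le_less_trans)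
  have "ennreal (integral\<^sup>L M f) \<le> ennreal c"
    using nn_integral_eq_integral[OF int] nonneg bound by simp
  then show "integral\<^sup>L M f \<le> c" using \<open>0 \<le> c\<close> by simp
qed

lemma integral_power2_norm_add_le:
  fixes f g :: "'a \<Rightarrow> 'b::{real_normed_vector, second_countable_topology}"
  assumes f: "square_integrable M f" and g: "square_integrable M g"
  shows "(\<integral>x. (norm (f x + g x))\<^sup>2 \<partial>M) \<le> 2 * ((\<integral>x. (norm (f x))\<^sup>2 \<partial>M) + (\<integral>x. (norm (g x))\<^sup>2 \<partial>M))"
proof -
  have "(\<integral>x. (norm (f x + g x))\<^sup>2 \<partial>M) \<le> (\<integral>x. 2 * ((norm (f x))\<^sup>2 + (norm (g x))\<^sup>2) \<partial>M)"
    using square_integrableD(2)[OF square_integrable_add[OF f g]] square_integrableD(2)[OF f]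
      square_integrableD(2)[OF g]
    by (intro integral_mono power2_norm_add_le) auto
  also have "\<dots> = 2 * ((\<integral>x. (norm (f x))\<^sup>2 \<partial>M) + (\<integral>x. (norm (g x))\<^sup>2 \<partial>M))"
    using square_integrableD(2)[OF f] square_integrableD(2)[OF g] by simp
  finally show ?thesis .
qed

lemma integral_power2_norm_add3_le:
  fixes f g h :: "'a \<Rightarrow> 'b::{real_normed_vector, second_countable_topology}"
  assumes f: "square_integrable M f" and g: "square_integrable M g" and h: "square_integrable M h"
  shows "(\<integral>x. (norm (f x + g x + h x))\<^sup>2 \<partial>M)
    \<le> 3 * ((\<integral>x. (norm (f x))\<^sup>2 \<partial>M) + (\<integral>x. (norm (g x))\<^sup>2 \<partial>M) + (\<integral>x. (norm (h x))\<^sup>2 \<partial>M))"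
proof -
  have "(\<integral>x. (norm (f x + g x + h x))\<^sup>2 \<partial>M)
      \<le> (\<integral>x. 3 * ((norm (f x))\<^sup>2 + (norm (g x))\<^sup>2 + (norm (h x))\<^sup>2) \<partial>M)"
    using square_integrableD(2)[OF square_integrable_add[OF square_integrable_add[OF f g] h]]
      square_integrableD(2)[OF f] square_integrableD(2)[OF g] square_integrableD(2)[OF h]
    by (intro integral_mono power2_norm_add3_le) auto
  also have "\<dots> = 3 * ((\<integral>x. (norm (f x))\<^sup>2 \<partial>M) + (\<integral>x. (norm (g x))\<^sup>2 \<partial>M) + (\<integral>x. (norm (h x))\<^sup>2 \<partial>M))"
    using square_integrableD(2)[OF f] square_integrableD(2)[OF g] square_integrableD(2)[OF h] by simp
  finally show ?thesis .
qed

lemma (in finite_measure) integral_power2_norm_sum_scaleR_le: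
  fixes f :: "'i \<Rightarrow> 'a \<Rightarrow> 'b::{real_inner, second_countable_topology}"
  assumes "finite I" and q: "\<And>i. i \<in> I \<Longrightarrow> 0 \<le> q i" and q_sum: "sum q I = 1"
    and f: "\<And>i. i \<in> I \<Longrightarrow> square_integrable M (f i)"
    and bound: "\<And>i. i \<in> I \<Longrightarrow> (\<integral>x. (norm (f i x))\<^sup>2 \<partial>M) \<le> B"
  shows "(\<integral>x. (norm (\<Sum>i\<in>I. q i *\<^sub>R f i x))\<^sup>2 \<partial>M) \<le> B"
proof -
  have "(\<integral>x. (norm (\<Sum>i\<in>I. q i *\<^sub>R f i x))\<^sup>2 \<partial>M) \<le> (\<integral>x. (\<Sum>i\<in>I. q i * (norm (f i x))\<^sup>2) \<partial>M)"
    using square_integrableD(2)[OF square_integrable_sum[OF square_integrable_scaleR[OF f]]]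
      square_integrableD(2)[OF f] assms(1) q q_sum
    by (intro integral_mono power2_norm_sum_scaleR_le) auto
  also have "\<dots> = (\<Sum>i\<in>I. q i * (\<integral>x. (norm (f i x))\<^sup>2 \<partial>M))"
    using square_integrableD(2)[OF f] by simp
  also have "\<dots> \<le> (\<Sum>i\<in>I. q i * B)"
    using q bound by (intro sum_mono mult_left_mono) auto
  also have "\<dots> = B"
    using q_sum by (simp add: sum_distrib_right[symmetric])
  finally show ?thesis .
qed

section \<open>Independent random variables\<close>

lemma (in prob_space) distr_pair_eq_pair_measure:
  assumes X: "X \<in> measurable M S" and Y: "Y \<in> measurable M T"
    and indep: "\<And>A B. A \<in> sets S \<Longrightarrow> B \<in> sets T \<Longrightarrow>
      prob ((X -` A \<inter> space M) \<inter> (Y -` B \<inter> space M)) = prob (X -` A \<inter> space M) * prob (Y -` B \<inter> space M)"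
  shows "distr M (S \<Otimes>\<^sub>M T) (\<lambda>\<omega>. (X \<omega>, Y \<omega>)) = distr M S X \<Otimes>\<^sub>M distr M T Y"
proof (rule pair_measure_eqI[symmetric])
  interpret PX: prob_space "distr M S X" using X by (rule prob_space_distr)
  interpret PY: prob_space "distr M T Y" using Y by (rule prob_space_distr)
  show "sigma_finite_measure (distr M S X)" "sigma_finite_measure (distr M T Y)" ..
  show "sets (distr M S X \<Otimes>\<^sub>M distr M T Y) = sets (distr M (S \<Otimes>\<^sub>M T) (\<lambda>\<omega>. (X \<omega>, Y \<omega>)))"
    by (simp cong: sets_pair_measure_cong)
  fix A B assume "A \<in> sets (distr M S X)" "B \<in> sets (distr M T Y)"
  then have A: "A \<in> sets S" and B: "B \<in> sets T" by auto
  have "(\<lambda>\<omega>. (X \<omega>, Y \<omega>)) -` (A \<times> B) \<inter> space M = (X -` A \<inter> space M) \<inter> (Y -` B \<inter> space M)"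
    by auto
  then show "emeasure (distr M S X) A * emeasure (distr M T Y) B
      = emeasure (distr M (S \<Otimes>\<^sub>M T) (\<lambda>\<omega>. (X \<omega>, Y \<omega>))) (A \<times> B)"
    using X Y A B indep[OF A B]
    by (simp add: emeasure_distr emeasure_eq_measure measure_nonneg ennreal_mult)
qed

lemma (in prob_space)
  fixes f :: "'x \<times> 'y \<Rightarrow> 'c::{banach, second_countable_topology}"
  assumes X: "X \<in> measurable M S" and Y: "Y \<in> measurable M T"
    and joint: "distr M (S \<Otimes>\<^sub>M T) (\<lambda>\<omega>. (X \<omega>, Y \<omega>)) = distr M S X \<Otimes>\<^sub>M distr M T Y"
    and f: "f \<in> borel_measurable (S \<Otimes>\<^sub>M T)" and int: "integrable M (\<lambda>\<omega>. f (X \<omega>, Y \<omega>))"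
  shows AE_integrable_independent: "AE \<omega> in M. integrable (distr M T Y) (\<lambda>y. f (X \<omega>, y))"
    and integral_independent: "(\<integral>\<omega>. f (X \<omega>, Y \<omega>) \<partial>M) = (\<integral>\<omega>. (\<integral>y. f (X \<omega>, y) \<partial>distr M T Y) \<partial>M)"
proof -
  interpret PX: prob_space "distr M S X" using X by (rule prob_space_distr)
  interpret PY: prob_space "distr M T Y" using Y by (rule prob_space_distr)
  interpret P: pair_prob_space "distr M S X" "distr M T Y" ..
  have XY: "(\<lambda>\<omega>. (X \<omega>, Y \<omega>)) \<in> measurable M (S \<Otimes>\<^sub>M T)" using X Y by measurable
  have sets_P: "sets (distr M S X \<Otimes>\<^sub>M distr M T Y) = sets (S \<Otimes>\<^sub>M T)"
    by (intro sets_pair_measure_cong) simp_all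
  have f_P: "f \<in> borel_measurable (distr M S X \<Otimes>\<^sub>M distr M T Y)"
    using f by (simp add: measurable_cong_sets[OF sets_P refl])
  have int_P: "integrable (distr M S X \<Otimes>\<^sub>M distr M T Y) f"
    unfolding joint[symmetric] using int by (simp add: integrable_distr_eq[OF XY f])
  show "AE \<omega> in M. integrable (distr M T Y) (\<lambda>y. f (X \<omega>, y))"
    by (rule AE_distrD[OF X P.AE_integrable_fst'[OF int_P]])
  have inner_meas: "(\<lambda>x. \<integral>y. f (x, y) \<partial>distr M T Y) \<in> borel_measurable S"
  proof -
    have "(\<lambda>x. \<integral>y. f (x, y) \<partial>distr M T Y) \<in> borel_measurable (distr M S X)"
      using PY.borel_measurable_lebesgue_integral[of "\<lambda>x y. f (x, y)"] f_P by simp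
    moreover have "borel_measurable (distr M S X) = borel_measurable S"
      by (rule measurable_cong_sets) simp_all
    ultimately show ?thesis by simp
  qed
  have "(\<integral>\<omega>. f (X \<omega>, Y \<omega>) \<partial>M) = integral\<^sup>L (distr M S X \<Otimes>\<^sub>M distr M T Y) f"
    unfolding joint[symmetric] by (rule integral_distr[OF XY f, symmetric])
  also have "\<dots> = (\<integral>x. (\<integral>y. f (x, y) \<partial>distr M T Y) \<partial>distr M S X)"
    by (rule P.integral_fst'[OF int_P, symmetric])
  also have "\<dots> = (\<integral>\<omega>. (\<integral>y. f (X \<omega>, y) \<partial>distr M T Y) \<partial>M)"
    by (rule integral_distr[OF X inner_meas])
  finally show "(\<integral>\<omega>. f (X \<omega>, Y \<omega>) \<partial>M) = (\<integral>\<omega>. (\<integral>y. f (X \<omega>, y) \<partial>distr M T Y) \<partial>M)" .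
qed

lemma (in prob_space) integral_inner_unbiased_indep:
  fixes h :: "'v::{real_inner, banach, second_countable_topology} \<Rightarrow> 'n \<Rightarrow> 'v"
    and X\<^sub>1 X\<^sub>2 :: "'a \<Rightarrow> 'v"
  assumes X: "(\<lambda>\<omega>. (X\<^sub>1 \<omega>, X\<^sub>2 \<omega>)) \<in> borel_measurable M" and Y: "Y \<in> measurable M N"
    and joint: "distr M (borel \<Otimes>\<^sub>M N) (\<lambda>\<omega>. ((X\<^sub>1 \<omega>, X\<^sub>2 \<omega>), Y \<omega>))
      = distr M borel (\<lambda>\<omega>. (X\<^sub>1 \<omega>, X\<^sub>2 \<omega>)) \<Otimes>\<^sub>M distr M N Y"
    and h: "(\<lambda>(x, y). h x y) \<in> borel_measurable (borel \<Otimes>\<^sub>M N)"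
    and gh: "gh \<in> borel_measurable borel"
    and unbiased: "AE \<omega> in M. (\<integral>y. h (X\<^sub>1 \<omega>) y \<partial>distr M N Y) = gh (X\<^sub>1 \<omega>)"
    and sq_h: "square_integrable M (\<lambda>\<omega>. h (X\<^sub>1 \<omega>) (Y \<omega>))" and sq_X\<^sub>2: "square_integrable M X\<^sub>2"
  shows "(\<integral>\<omega>. h (X\<^sub>1 \<omega>) (Y \<omega>) \<bullet> X\<^sub>2 \<omega> \<partial>M) = (\<integral>\<omega>. gh (X\<^sub>1 \<omega>) \<bullet> X\<^sub>2 \<omega> \<partial>M)"
proof -
  interpret PY: prob_space "distr M N Y" using Y by (rule prob_space_distr)
  have [measurable]: "fst \<in> borel_measurable (borel :: ('v \<times> 'v) measure)"
    "snd \<in> borel_measurable (borel :: ('v \<times> 'v) measure)"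
    unfolding borel_prod[symmetric] by (rule measurable_fst measurable_snd)+
  have "(\<lambda>z :: ('v \<times> 'v) \<times> 'n. (fst (fst z), snd z)) \<in> measurable (borel \<Otimes>\<^sub>M N) (borel \<Otimes>\<^sub>M N)"
    by measurable
  from measurable_compose[OF this h]
  have h_fst[measurable]: "(\<lambda>z :: ('v \<times> 'v) \<times> 'n. h (fst (fst z)) (snd z)) \<in> borel_measurable (borel \<Otimes>\<^sub>M N)"
    by (simp add: case_prod_beta)
  have "(\<lambda>(x, y). h (fst x) y \<bullet> snd x) \<in> borel_measurable ((borel :: ('v \<times> 'v) measure) \<Otimes>\<^sub>M N)"
    unfolding case_prod_beta by measurable
  then have "(\<lambda>x. \<integral>y. h (fst x) y \<bullet> snd x \<partial>distr M N Y) \<in> borel_measurable (borel :: ('v \<times> 'v) measure)"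
    by (intro PY.borel_measurable_lebesgue_integral)
      (simp add: measurable_cong_sets[OF sets_pair_measure_cong[OF refl sets_distr] refl])
  from measurable_compose[OF X this]
  have inner_meas: "(\<lambda>\<omega>. \<integral>y. h (X\<^sub>1 \<omega>) y \<bullet> X\<^sub>2 \<omega> \<partial>distr M N Y) \<in> borel_measurable M"
    by simp
  have X\<^sub>1: "X\<^sub>1 \<in> borel_measurable M" and X\<^sub>2: "X\<^sub>2 \<in> borel_measurable M"
    using measurable_compose[OF X, of fst] measurable_compose[OF X, of snd] by simp_all
  have "AE \<omega> in M. integrable (distr M N Y) (\<lambda>y. h (X\<^sub>1 \<omega>) y)"
    using AE_integrable_independent[OF X Y joint h_fst] integrable_square_integrable[OF sq_h] by simp
  then have "AE \<omega> in M. (\<integral>y. h (X\<^sub>1 \<omega>) y \<bullet> X\<^sub>2 \<omega> \<partial>distr M N Y) = gh (X\<^sub>1 \<omega>) \<bullet> X\<^sub>2 \<omega>"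
    using unbiased by eventually_elim simp
  then have "(\<integral>\<omega>. (\<integral>y. h (X\<^sub>1 \<omega>) y \<bullet> X\<^sub>2 \<omega> \<partial>distr M N Y) \<partial>M) = (\<integral>\<omega>. gh (X\<^sub>1 \<omega>) \<bullet> X\<^sub>2 \<omega> \<partial>M)"
    using inner_meas measurable_compose[OF X\<^sub>1 gh] X\<^sub>2 by (intro integral_cong_AE) (simp_all add: comp_def)
  moreover have "(\<integral>\<omega>. h (X\<^sub>1 \<omega>) (Y \<omega>) \<bullet> X\<^sub>2 \<omega> \<partial>M) = (\<integral>\<omega>. (\<integral>y. h (X\<^sub>1 \<omega>) y \<bullet> X\<^sub>2 \<omega> \<partial>distr M N Y) \<partial>M)"
    using integral_independent[OF X Y joint, of "\<lambda>z. h (fst (fst z)) (snd z) \<bullet> snd (fst z)"]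
      integrable_inner_square_integrable[OF sq_h sq_X\<^sub>2] by simp
  ultimately show ?thesis by simp
qed

section \<open>The perturbed federated iteration\<close>

locale perturbed_fedavg = prob_space M for M :: "'b measure" +
  fixes N :: "'n measure" and p :: "'c::finite \<Rightarrow> 'c \<Rightarrow> real"
    and Fl :: "'c \<Rightarrow> 'a::euclidean_space \<Rightarrow> real"
    and gradF :: "'c \<Rightarrow> 'a \<Rightarrow> 'a"
    and g :: "'c \<Rightarrow> 'a \<Rightarrow> 'n \<Rightarrow> 'a"
    and \<xi> :: "'c \<Rightarrow> nat \<Rightarrow> nat \<Rightarrow> 'b \<Rightarrow> 'n"
    and w0 :: 'a
    and \<beta> L \<sigma> Gb :: real
    and E :: nat and \<gamma> :: "nat \<Rightarrow> real"
  assumes p_nonneg: "\<And>i n. 0 \<le> p i n"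
    and p_sum: "(\<Sum>i\<in>UNIV. \<Sum>n\<in>UNIV. p i n) = 1"
    and pw_pos: "\<And>i. 0 < pw p i"
    and beta: "0 < \<beta>" "\<beta> < 1"
    and E_pos: "1 \<le> E"
    and gamma_pos: "\<And>s. 0 < \<gamma> s"
    and L_pos: "0 < L"
    and grad: "\<And>i x. (Fl i has_derivative (\<lambda>h. gradF i x \<bullet> h)) (at x)"
    and smooth: "\<And>i x y. norm (gradF i x - gradF i y) \<le> L * norm (x - y)"
    and \<xi>_meas: "\<And>i s k. \<xi> i s k \<in> measurable M N"
    and g_meas: "\<And>i. (\<lambda>(x, y). g i x y) \<in> borel_measurable (borel \<Otimes>\<^sub>M N)"
    and indep: "indep_vars (\<lambda>_. N) (\<lambda>(i, s, k). \<xi> i s k) UNIV"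
    and unbiased: "\<And>i s k. k < E \<Longrightarrow> AE \<omega> in M.
          (\<integral>y. g i (fed_wt p g \<beta> E \<gamma> w0 (\<lambda>i s k. \<xi> i s k \<omega>) s k i) y \<partial>(distr M N (\<xi> i s k)))
            = gradF i (fed_wt p g \<beta> E \<gamma> w0 (\<lambda>i s k. \<xi> i s k \<omega>) s k i)"
    and variance: "\<And>i s k. k < E \<Longrightarrow>
          (\<integral>\<^sup>+\<omega>. ennreal ((norm (g i (fed_wt p g \<beta> E \<gamma> w0 (\<lambda>i s k. \<xi> i s k \<omega>) s k i) (\<xi> i s k \<omega>)
              - gradF i (fed_wt p g \<beta> E \<gamma> w0 (\<lambda>i s k. \<xi> i s k \<omega>) s k i)))\<^sup>2) \<partial>M) \<le> ennreal (\<sigma>\<^sup>2)"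
    and second_moment: "\<And>i s k. k < E \<Longrightarrow>
          (\<integral>\<^sup>+\<omega>. ennreal ((norm (g i (fed_wt p g \<beta> E \<gamma> w0 (\<lambda>i s k. \<xi> i s k \<omega>) s k i) (\<xi> i s k \<omega>)))\<^sup>2) \<partial>M)
            \<le> ennreal (Gb\<^sup>2)"
begin

text \<open>Paper notation: \<open>start s\<close> is wbar_{s,0}, \<open>anchor s i\<close> is u^i_s, \<open>iterate s k i\<close> is w^i_{s,k},
  \<open>perturbed s k i\<close> is wtilde^i_{s,k}, \<open>average s k\<close> is wbar_{s,k}; \<open>full_grad s k\<close> is
  \<nabla>F(wbar_{s,k}) and \<open>probe_grad s k\<close> is sum_i p_i \<nabla>F_i(wtilde^i_{s,k}).\<close>

definition "start s \<omega> = fst (fed_state p g \<beta> E \<gamma> w0 (\<lambda>i s k. \<xi> i s k \<omega>) s)"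
definition "anchor s i \<omega> = snd (fed_state p g \<beta> E \<gamma> w0 (\<lambda>i s k. \<xi> i s k \<omega>) s) i"
definition "iterate s k i \<omega> = fed_w p g \<beta> E \<gamma> w0 (\<lambda>i s k. \<xi> i s k \<omega>) s k i"
definition "perturbed s k i \<omega> = fed_wt p g \<beta> E \<gamma> w0 (\<lambda>i s k. \<xi> i s k \<omega>) s k i"
definition "average s k \<omega> = fed_wbar p g \<beta> E \<gamma> w0 (\<lambda>i s k. \<xi> i s k \<omega>) s k"
definition "sgrad s k i \<omega> = g i (perturbed s k i \<omega>) (\<xi> i s k \<omega>)"
definition "noise s k i \<omega> = sgrad s k i \<omega> - gradF i (perturbed s k i \<omega>)"
definition "avg_noise s k \<omega> = (\<Sum>i\<in>UNIV. pw p i *\<^sub>R noise s k i \<omega>)"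
definition "F x = (\<Sum>i\<in>UNIV. pw p i * Fl i x)"
definition "full_grad s k \<omega> = (\<Sum>i\<in>UNIV. pw p i *\<^sub>R gradF i (average s k \<omega>))"
definition "probe_grad s k \<omega> = (\<Sum>i\<in>UNIV. pw p i *\<^sub>R gradF i (perturbed s k i \<omega>))"

lemma sum_pw: "(\<Sum>i\<in>UNIV. pw p i) = 1"
  using p_sum by (simp add: pw_def)

lemma pw_nonneg: "0 \<le> pw p i"
  using pw_pos[of i] by simp

lemma perturbed_eq: "perturbed s k i \<omega> = \<beta> *\<^sub>R iterate s k i \<omega> + (1 - \<beta>) *\<^sub>R anchor s i \<omega>"
  by (simp add: perturbed_def fed_wt_def iterate_def anchor_def)

lemma iterate_0: "iterate s 0 i \<omega> = start s \<omega>"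
  by (simp add: iterate_def fed_w_def start_def)

lemma iterate_Suc: "iterate s (Suc k) i \<omega> = iterate s k i \<omega> - \<gamma> s *\<^sub>R sgrad s k i \<omega>"
  by (simp add: iterate_def fed_w_def sgrad_def perturbed_def fed_wt_def)

lemma start_0: "start 0 \<omega> = w0"
  by (simp add: start_def)

lemma anchor_0: "anchor 0 i \<omega> = w0"
  by (simp add: anchor_def)

lemma start_Suc: "start (Suc s) \<omega> = (\<Sum>i\<in>UNIV. pw p i *\<^sub>R iterate s E i \<omega>)"
  by (simp add: start_def iterate_def fed_w_def Let_def case_prod_beta)

lemma anchor_Suc: "anchor (Suc s) i \<omega> = (1 / pw p i) *\<^sub>R (\<Sum>n\<in>UNIV. p i n *\<^sub>R iterate s E n \<omega>)"
  by (simp add: anchor_def iterate_def fed_w_def Let_def case_prod_beta)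

lemma average_eq: "average s k \<omega> = (\<Sum>i\<in>UNIV. pw p i *\<^sub>R iterate s k i \<omega>)"
  by (simp add: average_def fed_wbar_def iterate_def)

lemma average_0: "average s 0 \<omega> = start s \<omega>"
  by (simp add: average_eq iterate_0 scaleR_sum_left[symmetric] sum_pw)

lemma average_Suc: "average s (Suc k) \<omega> = average s k \<omega> - \<gamma> s *\<^sub>R (\<Sum>i\<in>UNIV. pw p i *\<^sub>R sgrad s k i \<omega>)"
  by (simp add: average_eq iterate_Suc scaleR_diff_right sum_subtractf scaleR_sum_right mult.commute)

lemma average_Suc_0: "average (Suc s) 0 \<omega> = average s E \<omega>"
  by (simp only: average_0 start_Suc average_eq[of s E])

definition "noise_events idx = {(\<lambda>(i, s, k). \<xi> i s k) idx -` A \<inter> space M | A. A \<in> sets N}"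

definition "noise_alg I = sigma (space M) (\<Union>idx\<in>I. noise_events idx)"

definition past :: "nat \<Rightarrow> nat \<Rightarrow> ('c \<times> nat \<times> nat) set" where
  "past s k = {(i, r, j). r < s \<or> (r = s \<and> j < k)}"

lemma noise_events_sets: "(\<Union>idx\<in>I. noise_events idx) \<subseteq> sets M"
  unfolding noise_events_def using \<xi>_meas by (auto split: prod.splits intro: measurable_sets)

lemma noise_events_Pow: "(\<Union>idx\<in>I. noise_events idx) \<subseteq> Pow (space M)"
  unfolding noise_events_def by auto

lemma sets_noise_alg: "sets (noise_alg I) = sigma_sets (space M) (\<Union>idx\<in>I. noise_events idx)"
  unfolding noise_alg_def using noise_events_Pow by (rule sets_measure_of)

lemma space_noise_alg[simp]: "space (noise_alg I) = space M"
  unfolding noise_alg_def using noise_events_Pow by (rule space_measure_of)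

lemma subalgebra_noise_alg: "subalgebra M (noise_alg I)"
  unfolding subalgebra_def using sets.sigma_sets_subset[OF noise_events_sets[of I]]
  by (simp add: sets_noise_alg)

lemma measurable_noise_alg_M: "f \<in> measurable (noise_alg I) X \<Longrightarrow> f \<in> measurable M X"
  by (rule measurable_from_subalg[OF subalgebra_noise_alg])

lemma \<xi>_noise_alg: "(i, s, k) \<in> I \<Longrightarrow> \<xi> i s k \<in> measurable (noise_alg I) N"
proof (rule measurableI)
  fix \<omega> assume "\<omega> \<in> space (noise_alg I)"
  then show "\<xi> i s k \<omega> \<in> space N" using \<xi>_meas[of i s k] by (auto intro: measurable_space)
next
  fix A assume "A \<in> sets N" and "(i, s, k) \<in> I"
  moreover have "\<xi> i s k -` A \<inter> space M \<in> noise_events (i, s, k)"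
    unfolding noise_events_def using \<open>A \<in> sets N\<close> by auto
  ultimately have "\<xi> i s k -` A \<inter> space M \<in> (\<Union>idx\<in>I. noise_events idx)"
    by blast
  then show "\<xi> i s k -` A \<inter> space (noise_alg I) \<in> sets (noise_alg I)"
    unfolding sets_noise_alg by auto
qed

lemma past_Suc: "past s k \<subseteq> past s (Suc k)"
  and past_E: "past s E \<subseteq> past (Suc s) 0"
  and past_0: "past s 0 \<subseteq> past s k"
  and in_past_Suc: "(i, s, k) \<in> past s (Suc k)"
  and notin_past: "(i, s, k) \<notin> past s k"
  unfolding past_def by auto

lemma iterate_noise_measurable_aux:
  assumes start: "start s \<in> borel_measurable (noise_alg I)"
    and anchor: "\<And>i. anchor s i \<in> borel_measurable (noise_alg I)"
  shows "past s k \<subseteq> I \<Longrightarrow> iterate s k i \<in> borel_measurable (noise_alg I)"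
proof (induction k arbitrary: i)
  case 0
  then show ?case using start by (simp add: iterate_0[abs_def])
next
  case (Suc k)
  have iter: "iterate s k i \<in> borel_measurable (noise_alg I)"
    using Suc past_Suc by blast
  then have "perturbed s k i \<in> borel_measurable (noise_alg I)"
    unfolding perturbed_eq[abs_def] using anchor[of i] by measurable
  moreover have "\<xi> i s k \<in> measurable (noise_alg I) N"
    using Suc.prems in_past_Suc by (intro \<xi>_noise_alg) blast
  ultimately have "sgrad s k i \<in> borel_measurable (noise_alg I)"
    using measurable_compose[OF measurable_Pair g_meas[of i]] by (simp add: sgrad_def[abs_def])
  then show ?case unfolding iterate_Suc[abs_def] using iter by measurable
qed

lemma state_noise_measurable:
  "past s 0 \<subseteq> I \<Longrightarrow> start s \<in> borel_measurable (noise_alg I) \<and> (\<forall>i. anchor s i \<in> borel_measurable (noise_alg I))"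
proof (induction s)
  case 0
  then show ?case by (simp add: start_0[abs_def] anchor_0[abs_def])
next
  case (Suc s)
  have "past s 0 \<subseteq> I" and past_E_I: "past s E \<subseteq> I"
    using Suc.prems past_0[of s E] past_E[of s] by blast+
  with Suc.IH have "start s \<in> borel_measurable (noise_alg I)" "\<And>i. anchor s i \<in> borel_measurable (noise_alg I)"
    by blast+
  from iterate_noise_measurable_aux[OF this past_E_I]
  have iter: "\<And>i. iterate s E i \<in> borel_measurable (noise_alg I)" .
  have "start (Suc s) \<in> borel_measurable (noise_alg I)"
    unfolding start_Suc[abs_def] using iter by measurable
  moreover have "anchor (Suc s) i \<in> borel_measurable (noise_alg I)" for i
    unfolding anchor_Suc[abs_def] using iter by measurable
  ultimately show ?case by blast
qed

lemma iterate_noise_measurable: "past s k \<subseteq> I \<Longrightarrow> iterate s k i \<in> borel_measurable (noise_alg I)"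
  using state_noise_measurable[of s I] past_0[of s k] iterate_noise_measurable_aux[of s I k i]
  by blast

lemma anchor_noise_measurable: "past s k \<subseteq> I \<Longrightarrow> anchor s i \<in> borel_measurable (noise_alg I)"
  using state_noise_measurable[of s I] past_0[of s k] by blast

lemma perturbed_noise_measurable: "past s k \<subseteq> I \<Longrightarrow> perturbed s k i \<in> borel_measurable (noise_alg I)"
  unfolding perturbed_eq[abs_def]
  using iterate_noise_measurable[of s k I i] anchor_noise_measurable[of s k I i] by measurable

lemma average_noise_measurable: "past s k \<subseteq> I \<Longrightarrow> average s k \<in> borel_measurable (noise_alg I)"
  unfolding average_eq[abs_def] using iterate_noise_measurable[of s k I] by measurable

lemma sgrad_noise_measurable:
  assumes "past s k \<subseteq> I" and "(i, s, k) \<in> I"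
  shows "sgrad s k i \<in> borel_measurable (noise_alg I)"
proof -
  have "(\<lambda>\<omega>. (perturbed s k i \<omega>, \<xi> i s k \<omega>)) \<in> measurable (noise_alg I) (borel \<Otimes>\<^sub>M N)"
    using perturbed_noise_measurable[OF assms(1)] \<xi>_noise_alg[OF assms(2)] by (rule measurable_Pair)
  from measurable_compose[OF this g_meas[of i]] show ?thesis
    by (simp add: sgrad_def[abs_def])
qed

lemma sgrad_measurable: "sgrad s k i \<in> borel_measurable M"
  by (rule measurable_noise_alg_M[OF sgrad_noise_measurable[of s k UNIV]]) auto

lemma perturbed_measurable: "perturbed s k i \<in> borel_measurable M"
  by (rule measurable_noise_alg_M[OF perturbed_noise_measurable[of s k UNIV]]) auto

lemma Int_stable_noise_events: "Int_stable (noise_events idx)"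
  unfolding noise_events_def
proof (safe intro!: Int_stableI)
  fix A B assume "A \<in> sets N" "B \<in> sets N"
  then show "\<exists>C. ((\<lambda>(i, s, k). \<xi> i s k) idx -` A \<inter> space M) \<inter> ((\<lambda>(i, s, k). \<xi> i s k) idx -` B \<inter> space M)
      = ((\<lambda>(i, s, k). \<xi> i s k) idx -` C \<inter> space M) \<and> C \<in> sets N"
    by (intro exI[of _ "A \<inter> B"]) auto
qed

lemma indep_set_noise_alg:
  assumes "(j, s, k) \<notin> I"
  shows "indep_set (sets (noise_alg I)) (sigma_sets (space M) (noise_events (j, s, k)))"
proof -
  have indep_events: "indep_sets noise_events UNIV"
  proof (rule indep_sets_mono_sets)
    show "indep_sets (\<lambda>idx. sigma_sets (space M) (noise_events idx)) UNIV"
      using indep unfolding indep_vars_def noise_events_def by auto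
  qed auto
  define J where "J = case_bool I {(j, s, k)}"
  have "indep_sets (\<lambda>b. sigma_sets (space M) (\<Union>idx\<in>J b. noise_events idx)) UNIV"
  proof (rule indep_sets_collect_sigma[OF _ Int_stable_noise_events])
    show "indep_sets noise_events (\<Union>b\<in>UNIV. J b)"
      by (rule indep_sets_mono_index[OF _ indep_events]) auto
    show "disjoint_family_on J UNIV"
      using assms unfolding J_def disjoint_family_on_def by (auto split: bool.splits)
  qed
  moreover have "(\<lambda>b. sigma_sets (space M) (\<Union>idx\<in>J b. noise_events idx))
      = case_bool (sets (noise_alg I)) (sigma_sets (space M) (noise_events (j, s, k)))"
    unfolding J_def sets_noise_alg by (auto simp: fun_eq_iff split: bool.splits)
  ultimately show ?thesis
    unfolding indep_set_def by simp
qed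

lemma distr_noise_pair_eq_pair_measure:
  assumes "(j, s, k) \<notin> I" and Z: "Z \<in> measurable (noise_alg I) S"
  shows "distr M (S \<Otimes>\<^sub>M N) (\<lambda>\<omega>. (Z \<omega>, \<xi> j s k \<omega>)) = distr M S Z \<Otimes>\<^sub>M distr M N (\<xi> j s k)"
proof (rule distr_pair_eq_pair_measure[OF measurable_noise_alg_M[OF Z] \<xi>_meas])
  fix A B assume "A \<in> sets S" "B \<in> sets N"
  then have "Z -` A \<inter> space M \<in> sets (noise_alg I)"
    and "\<xi> j s k -` B \<inter> space M \<in> sigma_sets (space M) (noise_events (j, s, k))"
    using measurable_sets[OF Z] unfolding noise_events_def by auto
  then show "prob ((Z -` A \<inter> space M) \<inter> (\<xi> j s k -` B \<inter> space M))
      = prob (Z -` A \<inter> space M) * prob (\<xi> j s k -` B \<inter> space M)"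
    by (rule indep_setD[OF indep_set_noise_alg[OF assms(1)]])
qed

lemma gradF_lipschitz: "L-lipschitz_on UNIV (gradF i)"
  unfolding lipschitz_on_def using L_pos smooth by (auto simp: dist_norm)

lemma gradF_measurable: "gradF i \<in> borel_measurable borel"
  by (rule borel_measurable_continuous_onI[OF lipschitz_on_continuous_on[OF gradF_lipschitz]])

lemma
  assumes "k < E"
  shows square_integrable_sgrad: "square_integrable M (sgrad s k i)"
    and integral_norm_sgrad_le: "(\<integral>\<omega>. (norm (sgrad s k i \<omega>))\<^sup>2 \<partial>M) \<le> Gb\<^sup>2"
proof -
  have bound: "(\<integral>\<^sup>+\<omega>. ennreal ((norm (sgrad s k i \<omega>))\<^sup>2) \<partial>M) \<le> ennreal (Gb\<^sup>2)"
    using second_moment[OF assms, of i s] by (simp add: sgrad_def perturbed_def)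
  have "(\<lambda>\<omega>. (norm (sgrad s k i \<omega>))\<^sup>2) \<in> borel_measurable M"
    using sgrad_measurable by measurable
  from integrable_integral_le_of_nn_integral_le[OF this _ bound]
  show "square_integrable M (sgrad s k i)" "(\<integral>\<omega>. (norm (sgrad s k i \<omega>))\<^sup>2 \<partial>M) \<le> Gb\<^sup>2"
    using sgrad_measurable by (auto simp: square_integrable_def)
qed

lemma integral_norm_noise_le:
  assumes "k < E"
  shows "(\<integral>\<omega>. (norm (noise s k i \<omega>))\<^sup>2 \<partial>M) \<le> \<sigma>\<^sup>2"
proof -
  have bound: "(\<integral>\<^sup>+\<omega>. ennreal ((norm (noise s k i \<omega>))\<^sup>2) \<partial>M) \<le> ennreal (\<sigma>\<^sup>2)"
    using variance[OF assms, of i s] by (simp add: noise_def sgrad_def perturbed_def)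
  have "(\<lambda>\<omega>. gradF i (perturbed s k i \<omega>)) \<in> borel_measurable M"
    using measurable_compose[OF perturbed_measurable gradF_measurable] by (simp add: comp_def)
  then have "(\<lambda>\<omega>. (norm (noise s k i \<omega>))\<^sup>2) \<in> borel_measurable M"
    unfolding noise_def using sgrad_measurable by measurable
  from integrable_integral_le_of_nn_integral_le(2)[OF this _ bound] show ?thesis by simp
qed

lemma square_integrable_iterate_aux:
  assumes start: "square_integrable M (start s)" and anchor: "\<And>i. square_integrable M (anchor s i)"
  shows "k \<le> E \<Longrightarrow> square_integrable M (iterate s k i)"
proof (induction k)
  case 0
  then show ?case using start by (simp add: iterate_0[abs_def])
next
  case (Suc k)
  then have "square_integrable M (iterate s k i)" and "square_integrable M (sgrad s k i)"
    by (simp_all add: square_integrable_sgrad)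
  then show ?case
    unfolding iterate_Suc[abs_def] by (intro square_integrable_diff square_integrable_scaleR)
qed

lemma square_integrable_state: "square_integrable M (start s) \<and> (\<forall>i. square_integrable M (anchor s i))"
proof (induction s)
  case 0
  then show ?case by (simp add: start_0[abs_def] anchor_0[abs_def] square_integrable_const)
next
  case (Suc s)
  then have iter: "square_integrable M (iterate s E i)" for i
    using square_integrable_iterate_aux by blast
  have "square_integrable M (start (Suc s))"
    unfolding start_Suc[abs_def] using iter by (intro square_integrable_sum square_integrable_scaleR)
  moreover have "square_integrable M (anchor (Suc s) i)" for i
    unfolding anchor_Suc[abs_def] using iter by (intro square_integrable_sum square_integrable_scaleR)
  ultimately show ?case by blast
qed

lemma square_integrable_start: "square_integrable M (start s)"
  using square_integrable_state by blast

lemma square_integrable_anchor: "square_integrable M (anchor s i)"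
  using square_integrable_state by blast

lemma square_integrable_iterate: "k \<le> E \<Longrightarrow> square_integrable M (iterate s k i)"
  using square_integrable_iterate_aux[OF square_integrable_start square_integrable_anchor] .

lemma square_integrable_perturbed: "k \<le> E \<Longrightarrow> square_integrable M (perturbed s k i)"
  unfolding perturbed_eq[abs_def]
  by (intro square_integrable_add square_integrable_scaleR square_integrable_iterate square_integrable_anchor)

lemma square_integrable_average: "k \<le> E \<Longrightarrow> square_integrable M (average s k)"
  unfolding average_eq[abs_def]
  by (intro square_integrable_sum square_integrable_scaleR square_integrable_iterate)

lemma iterate_minus_start: "iterate s k i \<omega> - start s \<omega> = - (\<gamma> s *\<^sub>R (\<Sum>j<k. sgrad s j i \<omega>))"
  by (induction k) (simp_all add: iterate_0 iterate_Suc scaleR_add_right)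

lemma integral_iterate_dev_le:
  assumes "k \<le> E"
  shows "(\<integral>\<omega>. (norm (iterate s k i \<omega> - start s \<omega>))\<^sup>2 \<partial>M) \<le> (\<gamma> s)\<^sup>2 * (real E)\<^sup>2 * Gb\<^sup>2"
proof -
  have sgrad_int: "integrable M (\<lambda>\<omega>. (norm (sgrad s j i \<omega>))\<^sup>2)" if "j < k" for j
    using that assms by (intro square_integrableD(2) square_integrable_sgrad) simp
  have "(\<integral>\<omega>. (norm (iterate s k i \<omega> - start s \<omega>))\<^sup>2 \<partial>M)
      \<le> (\<integral>\<omega>. (\<gamma> s)\<^sup>2 * (real k * (\<Sum>j<k. (norm (sgrad s j i \<omega>))\<^sup>2)) \<partial>M)"
  proof (rule integral_mono)
    show "integrable M (\<lambda>\<omega>. (norm (iterate s k i \<omega> - start s \<omega>))\<^sup>2)"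
      using assms
      by (intro square_integrableD(2) square_integrable_diff square_integrable_iterate square_integrable_start)
    show "integrable M (\<lambda>\<omega>. (\<gamma> s)\<^sup>2 * (real k * (\<Sum>j<k. (norm (sgrad s j i \<omega>))\<^sup>2)))"
      by (auto intro!: integrable_sum sgrad_int)
    show "(norm (iterate s k i \<omega> - start s \<omega>))\<^sup>2 \<le> (\<gamma> s)\<^sup>2 * (real k * (\<Sum>j<k. (norm (sgrad s j i \<omega>))\<^sup>2))"
      for \<omega>
      unfolding iterate_minus_start norm_minus_cancel norm_scaleR power_mult_distrib power2_abs
      by (intro mult_left_mono power2_norm_sum_le) simp_all
  qed
  also have "\<dots> = (\<gamma> s)\<^sup>2 * (real k * (\<Sum>j<k. \<integral>\<omega>. (norm (sgrad s j i \<omega>))\<^sup>2 \<partial>M))"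
    using sgrad_int by (simp add: integral_sum)
  also have "\<dots> \<le> (\<gamma> s)\<^sup>2 * (real k * (\<Sum>j<k. Gb\<^sup>2))"
    using assms by (intro mult_left_mono sum_mono integral_norm_sgrad_le) auto
  also have "\<dots> = (\<gamma> s)\<^sup>2 * (real k * (real k * Gb\<^sup>2))"
    by simp
  also have "\<dots> \<le> (\<gamma> s)\<^sup>2 * (real E * (real E * Gb\<^sup>2))"
    using assms by (intro mult_left_mono mult_mono) auto
  finally show ?thesis by (simp add: power2_eq_square mult_ac)
qed

lemma integral_anchor_dev_le:
  "(\<integral>\<omega>. (norm (anchor t i \<omega> - start t \<omega>))\<^sup>2 \<partial>M)
    \<le> (if 1 \<le> t then 4 * (\<gamma> (t - 1))\<^sup>2 * (real E)\<^sup>2 * Gb\<^sup>2 else 0)"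
proof (cases t)
  case 0
  then show ?thesis by (simp add: anchor_0 start_0)
next
  case (Suc s)
  define d where "d n \<omega> = iterate s E n \<omega> - start s \<omega>" for n \<omega>
  define c where "c n = p i n / pw p i" for n
  define B where "B = (\<gamma> s)\<^sup>2 * (real E)\<^sup>2 * Gb\<^sup>2"
  have c_nonneg: "0 \<le> c n" for n
    unfolding c_def using p_nonneg[of i n] pw_pos[of i] by simp
  have c_sum: "sum c UNIV = 1"
    unfolding c_def using pw_pos[of i] by (simp add: sum_divide_distrib[symmetric] pw_def)
  have d_sq: "square_integrable M (d n)" for n
    unfolding d_def by (intro square_integrable_diff square_integrable_iterate square_integrable_start) simp
  have d_bound: "(\<integral>\<omega>. (norm (d n \<omega>))\<^sup>2 \<partial>M) \<le> B" for n
    unfolding d_def B_def by (rule integral_iterate_dev_le) simp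
  have "anchor (Suc s) i \<omega> - start (Suc s) \<omega> = (\<Sum>n\<in>UNIV. c n *\<^sub>R d n \<omega>) + (- 1) *\<^sub>R (\<Sum>n\<in>UNIV. pw p n *\<^sub>R d n \<omega>)"
    for \<omega>
    unfolding d_def c_def anchor_Suc start_Suc
    by (simp add: scaleR_diff_right sum_subtractf scaleR_sum_right scaleR_sum_left[symmetric]
        sum_negf c_sum[unfolded c_def] sum_pw)
  then have "(\<integral>\<omega>. (norm (anchor t i \<omega> - start t \<omega>))\<^sup>2 \<partial>M)
      = (\<integral>\<omega>. (norm ((\<Sum>n\<in>UNIV. c n *\<^sub>R d n \<omega>) + (- 1) *\<^sub>R (\<Sum>n\<in>UNIV. pw p n *\<^sub>R d n \<omega>)))\<^sup>2 \<partial>M)"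
    using Suc by simp
  also have "\<dots> \<le> 2 * ((\<integral>\<omega>. (norm (\<Sum>n\<in>UNIV. c n *\<^sub>R d n \<omega>))\<^sup>2 \<partial>M)
      + (\<integral>\<omega>. (norm ((- 1) *\<^sub>R (\<Sum>n\<in>UNIV. pw p n *\<^sub>R d n \<omega>)))\<^sup>2 \<partial>M))"
    using d_sq
    by (intro integral_power2_norm_add_le square_integrable_sum square_integrable_scaleR) simp_all
  also have "\<dots> \<le> 2 * (B + B)"
    unfolding scaleR_minus1_left norm_minus_cancel using c_nonneg c_sum pw_nonneg sum_pw d_sq d_bound
    by (intro mult_left_mono add_mono integral_power2_norm_sum_scaleR_le) simp_all
  finally show ?thesis using Suc by (simp add: B_def mult_ac)
qed

text \<open>From wbar - wtilde^i = (wbar - wbar_{t,0}) - \<beta> (w^i - wbar_{t,0}) - (1 - \<beta>) (u^i - wbar_{t,0})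
  and |a + b + c|^2 \<le> 3 (|a|^2 + |b|^2 + |c|^2).\<close>

definition "drift_bound t = 6 * (\<gamma> t)\<^sup>2 * (real E)\<^sup>2 * Gb\<^sup>2
   + 3 * (1 - \<beta>)\<^sup>2 * (if 1 \<le> t then 4 * (\<gamma> (t - 1))\<^sup>2 * (real E)\<^sup>2 * Gb\<^sup>2 else 0)"

lemma integral_average_perturbed_dev_le:
  assumes "k \<le> E"
  shows "(\<integral>\<omega>. (norm (average t k \<omega> - perturbed t k i \<omega>))\<^sup>2 \<partial>M) \<le> drift_bound t"
proof -
  define d where "d n \<omega> = iterate t k n \<omega> - start t \<omega>" for n \<omega>
  define B where "B = (\<gamma> t)\<^sup>2 * (real E)\<^sup>2 * Gb\<^sup>2"
  have d_sq: "square_integrable M (d n)" for n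
    unfolding d_def using assms by (intro square_integrable_diff square_integrable_iterate square_integrable_start)
  have d_bound: "(\<integral>\<omega>. (norm (d n \<omega>))\<^sup>2 \<partial>M) \<le> B" for n
    unfolding d_def B_def using assms by (rule integral_iterate_dev_le)
  have u_sq: "square_integrable M (\<lambda>\<omega>. anchor t i \<omega> - start t \<omega>)"
    by (intro square_integrable_diff square_integrable_anchor square_integrable_start)
  have "average t k \<omega> - perturbed t k i \<omega>
      = (\<Sum>n\<in>UNIV. pw p n *\<^sub>R d n \<omega>) + (- \<beta>) *\<^sub>R d i \<omega> + (- (1 - \<beta>)) *\<^sub>R (anchor t i \<omega> - start t \<omega>)" for \<omega>
  proof -
    have "(\<Sum>n\<in>UNIV. pw p n *\<^sub>R d n \<omega>) = average t k \<omega> - start t \<omega>"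
      unfolding d_def average_eq
      by (simp add: scaleR_diff_right sum_subtractf scaleR_sum_left[symmetric] sum_pw)
    then show ?thesis unfolding perturbed_eq d_def by (simp add: algebra_simps)
  qed
  then have "(\<integral>\<omega>. (norm (average t k \<omega> - perturbed t k i \<omega>))\<^sup>2 \<partial>M)
      \<le> 3 * ((\<integral>\<omega>. (norm (\<Sum>n\<in>UNIV. pw p n *\<^sub>R d n \<omega>))\<^sup>2 \<partial>M) + (\<integral>\<omega>. (norm ((- \<beta>) *\<^sub>R d i \<omega>))\<^sup>2 \<partial>M)
        + (\<integral>\<omega>. (norm ((- (1 - \<beta>)) *\<^sub>R (anchor t i \<omega> - start t \<omega>)))\<^sup>2 \<partial>M))"
    using d_sq u_sq
    by (simp only:) (intro integral_power2_norm_add3_le square_integrable_sum square_integrable_scaleR)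
  also have "\<dots> = 3 * ((\<integral>\<omega>. (norm (\<Sum>n\<in>UNIV. pw p n *\<^sub>R d n \<omega>))\<^sup>2 \<partial>M) + \<beta>\<^sup>2 * (\<integral>\<omega>. (norm (d i \<omega>))\<^sup>2 \<partial>M)
        + (1 - \<beta>)\<^sup>2 * (\<integral>\<omega>. (norm (anchor t i \<omega> - start t \<omega>))\<^sup>2 \<partial>M))"
    by (simp add: power_mult_distrib power2_commute)
  also have "\<dots> \<le> 3 * (B + 1 * B
        + (1 - \<beta>)\<^sup>2 * (if 1 \<le> t then 4 * (\<gamma> (t - 1))\<^sup>2 * (real E)\<^sup>2 * Gb\<^sup>2 else 0))"
  proof -
    have "\<beta>\<^sup>2 \<le> 1" using beta by (simp add: power_le_one)
    then show ?thesis
      using pw_nonneg sum_pw d_sq d_bound integral_anchor_dev_le[of t i]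
      by (intro mult_left_mono add_mono integral_power2_norm_sum_scaleR_le mult_mono) (auto simp: B_def)
  qed
  also have "\<dots> = drift_bound t"
    unfolding drift_bound_def B_def by (simp add: algebra_simps)
  finally show ?thesis .
qed

lemma square_integrable_full_grad: "k \<le> E \<Longrightarrow> square_integrable M (full_grad t k)"
  unfolding full_grad_def[abs_def]
  by (intro square_integrable_sum square_integrable_scaleR
      square_integrable_lipschitz_comp[OF gradF_lipschitz] square_integrable_average)

lemma square_integrable_probe_grad: "k \<le> E \<Longrightarrow> square_integrable M (probe_grad t k)"
  unfolding probe_grad_def[abs_def]
  by (intro square_integrable_sum square_integrable_scaleR
      square_integrable_lipschitz_comp[OF gradF_lipschitz] square_integrable_perturbed)

lemma integral_grad_mismatch_le:
  assumes "k \<le> E"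
  shows "(\<integral>\<omega>. (norm (full_grad t k \<omega> - probe_grad t k \<omega>))\<^sup>2 \<partial>M) \<le> L\<^sup>2 * drift_bound t"
proof -
  have "full_grad t k \<omega> - probe_grad t k \<omega>
      = (\<Sum>i\<in>UNIV. pw p i *\<^sub>R (gradF i (average t k \<omega>) - gradF i (perturbed t k i \<omega>)))" for \<omega>
    by (simp add: full_grad_def probe_grad_def sum_subtractf scaleR_diff_right)
  moreover have "(\<integral>\<omega>. (norm (\<Sum>i\<in>UNIV. pw p i *\<^sub>R (gradF i (average t k \<omega>) - gradF i (perturbed t k i \<omega>))))\<^sup>2 \<partial>M)
      \<le> L\<^sup>2 * drift_bound t"
  proof (rule integral_power2_norm_sum_scaleR_le)
    fix i
    have sq: "square_integrable M (\<lambda>\<omega>. average t k \<omega> - perturbed t k i \<omega>)"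
      using assms by (intro square_integrable_diff square_integrable_average square_integrable_perturbed)
    show "square_integrable M (\<lambda>\<omega>. gradF i (average t k \<omega>) - gradF i (perturbed t k i \<omega>))"
      using assms
      by (intro square_integrable_diff square_integrable_lipschitz_comp[OF gradF_lipschitz]
          square_integrable_average square_integrable_perturbed)
    then have "(\<integral>\<omega>. (norm (gradF i (average t k \<omega>) - gradF i (perturbed t k i \<omega>)))\<^sup>2 \<partial>M)
        \<le> (\<integral>\<omega>. L\<^sup>2 * (norm (average t k \<omega> - perturbed t k i \<omega>))\<^sup>2 \<partial>M)"
    proof (rule integral_mono[OF square_integrableD(2)])
      show "integrable M (\<lambda>\<omega>. L\<^sup>2 * (norm (average t k \<omega> - perturbed t k i \<omega>))\<^sup>2)"
        using square_integrableD(2)[OF sq] by simp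
      show "(norm (gradF i (average t k \<omega>) - gradF i (perturbed t k i \<omega>)))\<^sup>2
          \<le> L\<^sup>2 * (norm (average t k \<omega> - perturbed t k i \<omega>))\<^sup>2" for \<omega>
        using smooth[of i "average t k \<omega>" "perturbed t k i \<omega>"]
        by (simp add: power_mult_distrib[symmetric] power_mono)
    qed
    also have "\<dots> \<le> L\<^sup>2 * drift_bound t"
      using mult_left_mono[OF integral_average_perturbed_dev_le[OF assms], of "L\<^sup>2" t i] by simp
    finally show "(\<integral>\<omega>. (norm (gradF i (average t k \<omega>) - gradF i (perturbed t k i \<omega>)))\<^sup>2 \<partial>M)
        \<le> L\<^sup>2 * drift_bound t" .
  qed (use pw_nonneg sum_pw in simp_all)
  ultimately show ?thesis by simp
qed

section \<open>Descent over one round\<close>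

lemma square_integrable_noise: "k < E \<Longrightarrow> square_integrable M (noise t k i)"
  unfolding noise_def[abs_def]
  by (intro square_integrable_diff square_integrable_sgrad
      square_integrable_lipschitz_comp[OF gradF_lipschitz] square_integrable_perturbed) simp_all

lemma square_integrable_avg_noise: "k < E \<Longrightarrow> square_integrable M (avg_noise t k)"
  unfolding avg_noise_def[abs_def]
  by (intro square_integrable_sum square_integrable_scaleR square_integrable_noise)

lemma gradF_comp_noise_measurable:
  "f \<in> borel_measurable (noise_alg I) \<Longrightarrow> (\<lambda>\<omega>. gradF i (f \<omega>)) \<in> borel_measurable (noise_alg I)"
  using measurable_compose[OF _ gradF_measurable[of i], of f] by (simp add: comp_def)

lemma integral_inner_noise_eq_0:
  assumes "k < E" and past: "past t k \<subseteq> I" and "(i, t, k) \<notin> I"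
    and Z: "Z \<in> borel_measurable (noise_alg I)" and Z_sq: "square_integrable M Z"
  shows "(\<integral>\<omega>. Z \<omega> \<bullet> noise t k i \<omega> \<partial>M) = 0"
proof -
  have X: "(\<lambda>\<omega>. (perturbed t k i \<omega>, Z \<omega>)) \<in> borel_measurable (noise_alg I)"
    using perturbed_noise_measurable[OF past] Z by (rule borel_measurable_Pair)
  have "(\<integral>\<omega>. g i (perturbed t k i \<omega>) (\<xi> i t k \<omega>) \<bullet> Z \<omega> \<partial>M) = (\<integral>\<omega>. gradF i (perturbed t k i \<omega>) \<bullet> Z \<omega> \<partial>M)"
  proof (rule integral_inner_unbiased_indep[OF measurable_noise_alg_M[OF X] \<xi>_meas _ g_meas gradF_measurable])
    show "distr M (borel \<Otimes>\<^sub>M N) (\<lambda>\<omega>. ((perturbed t k i \<omega>, Z \<omega>), \<xi> i t k \<omega>))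
        = distr M borel (\<lambda>\<omega>. (perturbed t k i \<omega>, Z \<omega>)) \<Otimes>\<^sub>M distr M N (\<xi> i t k)"
      by (rule distr_noise_pair_eq_pair_measure[OF \<open>(i, t, k) \<notin> I\<close> X])
    show "AE \<omega> in M. (\<integral>y. g i (perturbed t k i \<omega>) y \<partial>distr M N (\<xi> i t k)) = gradF i (perturbed t k i \<omega>)"
      using unbiased[OF \<open>k < E\<close>, of i t] by (simp add: perturbed_def)
    show "square_integrable M (\<lambda>\<omega>. g i (perturbed t k i \<omega>) (\<xi> i t k \<omega>))"
      using square_integrable_sgrad[OF \<open>k < E\<close>] by (simp add: sgrad_def[abs_def])
  qed (rule Z_sq)
  moreover have "integrable M (\<lambda>\<omega>. sgrad t k i \<omega> \<bullet> Z \<omega>)"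
    and "integrable M (\<lambda>\<omega>. gradF i (perturbed t k i \<omega>) \<bullet> Z \<omega>)"
    using \<open>k < E\<close> Z_sq
    by (auto intro!: integrable_inner_square_integrable square_integrable_sgrad
        square_integrable_lipschitz_comp[OF gradF_lipschitz] square_integrable_perturbed)
  ultimately show ?thesis
    by (simp add: noise_def inner_diff_right inner_commute sgrad_def)
qed

lemma integral_inner_avg_noise_eq_0:
  assumes "k < E" and Z: "Z \<in> borel_measurable (noise_alg (past t k))" and Z_sq: "square_integrable M Z"
  shows "(\<integral>\<omega>. Z \<omega> \<bullet> avg_noise t k \<omega> \<partial>M) = 0"
proof -
  have "integrable M (\<lambda>\<omega>. Z \<omega> \<bullet> noise t k i \<omega>)" for i
    using assms by (intro integrable_inner_square_integrable square_integrable_noise)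
  then have "(\<integral>\<omega>. Z \<omega> \<bullet> avg_noise t k \<omega> \<partial>M) = (\<Sum>i\<in>UNIV. pw p i * (\<integral>\<omega>. Z \<omega> \<bullet> noise t k i \<omega> \<partial>M))"
    by (simp add: avg_noise_def inner_sum_right)
  also have "\<dots> = 0"
    using integral_inner_noise_eq_0[OF \<open>k < E\<close> order_refl notin_past Z Z_sq] by simp
  finally show ?thesis .
qed

lemma integral_inner_noise_noise_eq_0:
  assumes "k < E" and "i \<noteq> j"
  shows "(\<integral>\<omega>. noise t k j \<omega> \<bullet> noise t k i \<omega> \<partial>M) = 0"
proof (rule integral_inner_noise_eq_0[OF \<open>k < E\<close>])
  let ?I = "insert (j, t, k) (past t k)"
  show "past t k \<subseteq> ?I" and "(i, t, k) \<notin> ?I"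
    using \<open>i \<noteq> j\<close> notin_past by auto
  show "noise t k j \<in> borel_measurable (noise_alg ?I)"
    unfolding noise_def[abs_def]
    by (intro borel_measurable_diff sgrad_noise_measurable gradF_comp_noise_measurable
        perturbed_noise_measurable) auto
  show "square_integrable M (noise t k j)"
    using \<open>k < E\<close> by (rule square_integrable_noise)
qed

lemma integral_norm_avg_noise_le:
  assumes "k < E"
  shows "(\<integral>\<omega>. (norm (avg_noise t k \<omega>))\<^sup>2 \<partial>M) \<le> \<sigma>\<^sup>2 * (\<Sum>i\<in>UNIV. (pw p i)\<^sup>2)"
proof -
  have int: "integrable M (\<lambda>\<omega>. noise t k j \<omega> \<bullet> noise t k i \<omega>)" for i j
    using assms by (intro integrable_inner_square_integrable square_integrable_noise)
  have "(\<integral>\<omega>. (norm (avg_noise t k \<omega>))\<^sup>2 \<partial>M)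
      = (\<Sum>i\<in>UNIV. \<Sum>j\<in>UNIV. pw p i * pw p j * (\<integral>\<omega>. noise t k j \<omega> \<bullet> noise t k i \<omega> \<partial>M))"
    using int
    by (simp add: avg_noise_def power2_norm_eq_inner inner_sum_left inner_sum_right
        sum_distrib_left mult_ac)
  also have "\<dots> = (\<Sum>i\<in>UNIV. (pw p i)\<^sup>2 * (\<integral>\<omega>. (norm (noise t k i \<omega>))\<^sup>2 \<partial>M))"
  proof (rule sum.cong[OF refl])
    fix i
    have "(\<Sum>j\<in>UNIV. pw p i * pw p j * (\<integral>\<omega>. noise t k j \<omega> \<bullet> noise t k i \<omega> \<partial>M))
        = pw p i * pw p i * (\<integral>\<omega>. noise t k i \<omega> \<bullet> noise t k i \<omega> \<partial>M)"
      using integral_inner_noise_noise_eq_0[OF assms] by (subst sum.remove[of _ i]) auto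
    then show "(\<Sum>j\<in>UNIV. pw p i * pw p j * (\<integral>\<omega>. noise t k j \<omega> \<bullet> noise t k i \<omega> \<partial>M))
        = (pw p i)\<^sup>2 * (\<integral>\<omega>. (norm (noise t k i \<omega>))\<^sup>2 \<partial>M)"
      by (simp only: power2_norm_eq_inner) (simp add: power2_eq_square)
  qed
  also have "\<dots> \<le> (\<Sum>i\<in>UNIV. (pw p i)\<^sup>2 * \<sigma>\<^sup>2)"
    using integral_norm_noise_le[OF assms] by (intro sum_mono mult_left_mono) auto
  finally show ?thesis by (simp add: sum_distrib_left mult.commute)
qed

lemma average_Suc_eq:
  "average t (Suc k) \<omega> = average t k \<omega> - \<gamma> t *\<^sub>R (probe_grad t k \<omega> + avg_noise t k \<omega>)"
  by (simp add: average_Suc probe_grad_def avg_noise_def noise_def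
      sum.distrib[symmetric] scaleR_add_right[symmetric])

lemma F_average_Suc_le:
  assumes "\<gamma> t * L \<le> 1"
  shows "F (average t (Suc k) \<omega>)
    \<le> F (average t k \<omega>) - \<gamma> t / 2 * (norm (full_grad t k \<omega>))\<^sup>2
      + \<gamma> t / 2 * (norm (full_grad t k \<omega> - probe_grad t k \<omega>))\<^sup>2
      - \<gamma> t * (full_grad t k \<omega> \<bullet> avg_noise t k \<omega>)
      + L * (\<gamma> t)\<^sup>2 * (probe_grad t k \<omega> \<bullet> avg_noise t k \<omega>)
      + L * (\<gamma> t)\<^sup>2 / 2 * (norm (avg_noise t k \<omega>))\<^sup>2"
proof -
  define A B D c where "A = full_grad t k \<omega>" and "B = probe_grad t k \<omega>"
    and "D = avg_noise t k \<omega>" and "c = \<gamma> t"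
  have "F (average t (Suc k) \<omega>) \<le> F (average t k \<omega>) - c * (A \<bullet> (B + D)) + L * c\<^sup>2 / 2 * (norm (B + D))\<^sup>2"
    using weighted_descent[OF grad smooth, where I=UNIV and q="pw p" and x="average t k \<omega>" and c=c and v="B + D"]
      pw_nonneg sum_pw
    unfolding F_def A_def B_def D_def c_def full_grad_def average_Suc_eq by simp
  \<comment> \<open>polarization of \<open>A \<bullet> B\<close>; the coefficient of \<open>(norm B)\<^sup>2\<close> is \<open>c (L c - 1) / 2 \<le> 0\<close>\<close>
  also have "\<dots> = F (average t k \<omega>) - c / 2 * (norm A)\<^sup>2 + c / 2 * (norm (A - B))\<^sup>2 - c * (A \<bullet> D)
      + L * c\<^sup>2 * (B \<bullet> D) + L * c\<^sup>2 / 2 * (norm D)\<^sup>2 + c / 2 * (L * c - 1) * (norm B)\<^sup>2"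
  proof -
    have AB: "A \<bullet> B = ((norm A)\<^sup>2 + (norm B)\<^sup>2 - (norm (A - B))\<^sup>2) / 2"
      by (simp add: power2_norm_eq_inner inner_diff_left inner_diff_right inner_commute)
    have BD: "(norm (B + D))\<^sup>2 = (norm B)\<^sup>2 + 2 * (B \<bullet> D) + (norm D)\<^sup>2"
      by (simp add: power2_norm_eq_inner inner_add_left inner_add_right inner_commute)
    show ?thesis
      unfolding inner_add_right AB BD by (simp add: field_simps power2_eq_square)
  qed
  also have "c / 2 * (L * c - 1) * (norm B)\<^sup>2 \<le> 0"
  proof -
    have "L * c - 1 \<le> 0" using assms by (simp add: c_def mult.commute)
    then have "c / 2 * (L * c - 1) \<le> 0"
      using gamma_pos[of t] by (simp add: c_def mult_nonneg_nonpos)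
    then show ?thesis by (simp add: mult_nonpos_nonneg)
  qed
  finally show ?thesis unfolding A_def B_def D_def c_def by simp
qed

lemma integrable_F_average:
  assumes "k \<le> E"
  shows "integrable M (\<lambda>\<omega>. F (average t k \<omega>))"
proof -
  have "integrable M (\<lambda>\<omega>. Fl i (average t k \<omega>))" for i
    using assms by (intro integrable_smooth_comp[OF grad smooth] square_integrable_average)
  then show ?thesis by (simp add: F_def)
qed

lemma full_grad_noise_measurable: "full_grad t k \<in> borel_measurable (noise_alg (past t k))"
  unfolding full_grad_def[abs_def]
  by (intro borel_measurable_sum borel_measurable_scaleR borel_measurable_const
      gradF_comp_noise_measurable average_noise_measurable order_refl)

lemma probe_grad_noise_measurable: "probe_grad t k \<in> borel_measurable (noise_alg (past t k))"
  unfolding probe_grad_def[abs_def]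
  by (intro borel_measurable_sum borel_measurable_scaleR borel_measurable_const
      gradF_comp_noise_measurable perturbed_noise_measurable order_refl)

lemma integral_F_average_Suc_le:
  assumes "k < E" and "\<gamma> t * L \<le> 1"
  shows "(\<integral>\<omega>. F (average t (Suc k) \<omega>) \<partial>M)
    \<le> (\<integral>\<omega>. F (average t k \<omega>) \<partial>M) - \<gamma> t / 2 * (\<integral>\<omega>. (norm (full_grad t k \<omega>))\<^sup>2 \<partial>M)
      + \<gamma> t / 2 * (\<integral>\<omega>. (norm (full_grad t k \<omega> - probe_grad t k \<omega>))\<^sup>2 \<partial>M)
      + L * (\<gamma> t)\<^sup>2 / 2 * (\<sigma>\<^sup>2 * (\<Sum>i\<in>UNIV. (pw p i)\<^sup>2))"
proof -
  have A: "square_integrable M (full_grad t k)" and B: "square_integrable M (probe_grad t k)"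
    and D: "square_integrable M (avg_noise t k)"
    using assms by (simp_all add: square_integrable_full_grad square_integrable_probe_grad
        square_integrable_avg_noise)
  note ints = integrable_F_average[of k t] integrable_F_average[of "Suc k" t]
    square_integrableD(2)[OF A] square_integrableD(2)[OF square_integrable_diff[OF A B]]
    square_integrableD(2)[OF D] integrable_inner_square_integrable[OF A D]
    integrable_inner_square_integrable[OF B D]
  have "(\<integral>\<omega>. F (average t (Suc k) \<omega>) \<partial>M)
      \<le> (\<integral>\<omega>. F (average t k \<omega>) - \<gamma> t / 2 * (norm (full_grad t k \<omega>))\<^sup>2
        + \<gamma> t / 2 * (norm (full_grad t k \<omega> - probe_grad t k \<omega>))\<^sup>2
        - \<gamma> t * (full_grad t k \<omega> \<bullet> avg_noise t k \<omega>)
        + L * (\<gamma> t)\<^sup>2 * (probe_grad t k \<omega> \<bullet> avg_noise t k \<omega>)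
        + L * (\<gamma> t)\<^sup>2 / 2 * (norm (avg_noise t k \<omega>))\<^sup>2 \<partial>M)"
    using assms ints by (intro integral_mono F_average_Suc_le) simp_all
  also have "\<dots> = (\<integral>\<omega>. F (average t k \<omega>) \<partial>M) - \<gamma> t / 2 * (\<integral>\<omega>. (norm (full_grad t k \<omega>))\<^sup>2 \<partial>M)
      + \<gamma> t / 2 * (\<integral>\<omega>. (norm (full_grad t k \<omega> - probe_grad t k \<omega>))\<^sup>2 \<partial>M)
      - \<gamma> t * (\<integral>\<omega>. full_grad t k \<omega> \<bullet> avg_noise t k \<omega> \<partial>M)
      + L * (\<gamma> t)\<^sup>2 * (\<integral>\<omega>. probe_grad t k \<omega> \<bullet> avg_noise t k \<omega> \<partial>M)
      + L * (\<gamma> t)\<^sup>2 / 2 * (\<integral>\<omega>. (norm (avg_noise t k \<omega>))\<^sup>2 \<partial>M)"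
    using assms ints by simp
  also have "\<dots> \<le> (\<integral>\<omega>. F (average t k \<omega>) \<partial>M) - \<gamma> t / 2 * (\<integral>\<omega>. (norm (full_grad t k \<omega>))\<^sup>2 \<partial>M)
      + \<gamma> t / 2 * (\<integral>\<omega>. (norm (full_grad t k \<omega> - probe_grad t k \<omega>))\<^sup>2 \<partial>M)
      + L * (\<gamma> t)\<^sup>2 / 2 * (\<sigma>\<^sup>2 * (\<Sum>i\<in>UNIV. (pw p i)\<^sup>2))"
    using integral_inner_avg_noise_eq_0[OF \<open>k < E\<close> full_grad_noise_measurable A]
      integral_inner_avg_noise_eq_0[OF \<open>k < E\<close> probe_grad_noise_measurable B]
      mult_left_mono[OF integral_norm_avg_noise_le[OF \<open>k < E\<close>, of t], of "(\<gamma> t)\<^sup>2"] L_pos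
    by simp
  finally show ?thesis .
qed

lemma integral_full_grad_le:
  assumes "k < E" and "\<gamma> t * L \<le> 1"
  shows "(\<integral>\<omega>. (norm (full_grad t k \<omega>))\<^sup>2 \<partial>M)
    \<le> 2 / \<gamma> t * ((\<integral>\<omega>. F (average t k \<omega>) \<partial>M) - (\<integral>\<omega>. F (average t (Suc k) \<omega>) \<partial>M))
      + (L\<^sup>2 * drift_bound t + L * \<gamma> t * \<sigma>\<^sup>2 * (\<Sum>i\<in>UNIV. (pw p i)\<^sup>2))"
proof -
  have "\<gamma> t / 2 * (\<integral>\<omega>. (norm (full_grad t k \<omega>))\<^sup>2 \<partial>M)
      \<le> (\<integral>\<omega>. F (average t k \<omega>) \<partial>M) - (\<integral>\<omega>. F (average t (Suc k) \<omega>) \<partial>M)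
        + \<gamma> t / 2 * (L\<^sup>2 * drift_bound t) + L * (\<gamma> t)\<^sup>2 / 2 * (\<sigma>\<^sup>2 * (\<Sum>i\<in>UNIV. (pw p i)\<^sup>2))"
  proof -
    have "\<gamma> t / 2 * (\<integral>\<omega>. (norm (full_grad t k \<omega> - probe_grad t k \<omega>))\<^sup>2 \<partial>M)
        \<le> \<gamma> t / 2 * (L\<^sup>2 * drift_bound t)"
      using assms gamma_pos[of t] by (intro mult_left_mono integral_grad_mismatch_le) auto
    with integral_F_average_Suc_le[OF assms] show ?thesis by linarith
  qed
  then show ?thesis
    using gamma_pos[of t] by (simp add: field_simps power2_eq_square)
qed

lemma average_integral_full_grad_le:
  assumes "\<gamma> t \<le> 1 / L"
  shows "(1 / real E) * (\<Sum>k<E. \<integral>\<omega>. (norm (full_grad t k \<omega>))\<^sup>2 \<partial>M)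
    \<le> 2 / (\<gamma> t * real E) * (\<integral>\<omega>. F (average t 0 \<omega>) - F (average (Suc t) 0 \<omega>) \<partial>M)
      + (L\<^sup>2 * drift_bound t + L * \<gamma> t * \<sigma>\<^sup>2 * (\<Sum>i\<in>UNIV. (pw p i)\<^sup>2))"
proof -
  define I where "I k = (\<integral>\<omega>. F (average t k \<omega>) \<partial>M)" for k
  define C where "C = L\<^sup>2 * drift_bound t + L * \<gamma> t * \<sigma>\<^sup>2 * (\<Sum>i\<in>UNIV. (pw p i)\<^sup>2)"
  have "\<gamma> t * L \<le> 1" using assms L_pos by (simp add: field_simps)
  then have "(\<Sum>k<E. \<integral>\<omega>. (norm (full_grad t k \<omega>))\<^sup>2 \<partial>M) \<le> (\<Sum>k<E. 2 / \<gamma> t * (I k - I (Suc k)) + C)"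
    unfolding I_def C_def by (intro sum_mono integral_full_grad_le) auto
  also have "\<dots> = 2 / \<gamma> t * (I 0 - I E) + real E * C"
    by (simp only: sum.distrib sum_distrib_left[symmetric] sum_lessThan_telescope' sum_constant
        card_lessThan)
  also have "I 0 - I E = (\<integral>\<omega>. F (average t 0 \<omega>) - F (average (Suc t) 0 \<omega>) \<partial>M)"
    unfolding I_def average_Suc_0 using integrable_F_average[of 0 t] integrable_F_average[of E t] by simp
  finally show ?thesis
    using E_pos gamma_pos[of t] unfolding C_def by (simp add: field_simps)
qed

lemma L_sq_drift_bound_le:
  "L\<^sup>2 * drift_bound t
    \<le> 4 * (\<gamma> t)\<^sup>2 * L\<^sup>2 * (real E)\<^sup>2 * Gb\<^sup>2 *
      (4 + (1 - \<beta>)\<^sup>2 + (if 1 \<le> t then 8 * (\<gamma> (t - 1))\<^sup>2 / (\<gamma> t)\<^sup>2 * (1 - 1 / \<beta>)\<^sup>2 else 0))"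
proof -
  define K where "K = L\<^sup>2 * (real E)\<^sup>2 * Gb\<^sup>2"
  define q where "q = (\<gamma> (t - 1))\<^sup>2"
  have "(1 - \<beta>)\<^sup>2 \<le> (1 - 1 / \<beta>)\<^sup>2"
  proof -
    have "(1 - 1 / \<beta>)\<^sup>2 = (1 - \<beta>)\<^sup>2 / \<beta>\<^sup>2"
      using beta by (simp add: field_simps power2_eq_square)
    moreover have "(1 - \<beta>)\<^sup>2 * \<beta>\<^sup>2 \<le> (1 - \<beta>)\<^sup>2"
      using beta by (intro mult_left_le) (simp_all add: power_le_one)
    ultimately show ?thesis
      using beta by (simp add: le_divide_eq)
  qed
  then have "12 * (1 - \<beta>)\<^sup>2 \<le> 32 * (1 - 1 / \<beta>)\<^sup>2"
    using zero_le_power2[of "1 - \<beta>"] by linarith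
  then have old_round: "12 * (1 - \<beta>)\<^sup>2 * (q * K) \<le> 32 * (1 - 1 / \<beta>)\<^sup>2 * (q * K)"
    unfolding K_def q_def by (intro mult_right_mono) auto
  have this_round: "6 * ((\<gamma> t)\<^sup>2 * K) \<le> 4 * (4 + (1 - \<beta>)\<^sup>2) * ((\<gamma> t)\<^sup>2 * K)"
    unfolding K_def by (intro mult_right_mono) auto
  have "L\<^sup>2 * drift_bound t = 6 * ((\<gamma> t)\<^sup>2 * K) + (if 1 \<le> t then 12 * (1 - \<beta>)\<^sup>2 * (q * K) else 0)"
    unfolding drift_bound_def K_def q_def by (simp add: algebra_simps)
  also have "\<dots> \<le> 4 * (4 + (1 - \<beta>)\<^sup>2) * ((\<gamma> t)\<^sup>2 * K)
      + (if 1 \<le> t then 32 * (1 - 1 / \<beta>)\<^sup>2 * (q * K) else 0)"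
  proof (rule add_mono[OF this_round])
    show "(if 1 \<le> t then 12 * (1 - \<beta>)\<^sup>2 * (q * K) else 0)
        \<le> (if 1 \<le> t then 32 * (1 - 1 / \<beta>)\<^sup>2 * (q * K) else 0)"
      using old_round by (cases "1 \<le> t") (simp_all only: if_True if_False order_refl)
  qed
  also have "\<dots> = 4 * (\<gamma> t)\<^sup>2 * L\<^sup>2 * (real E)\<^sup>2 * Gb\<^sup>2 *
      (4 + (1 - \<beta>)\<^sup>2 + (if 1 \<le> t then 8 * (\<gamma> (t - 1))\<^sup>2 / (\<gamma> t)\<^sup>2 * (1 - 1 / \<beta>)\<^sup>2 else 0))"
    using gamma_pos[of t] unfolding K_def q_def by (simp add: field_simps)
  finally show ?thesis .
qed

end

theorem lemma9:
  fixes M :: "'b measure" and N :: "'n measure"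
    and p :: "'c::finite \<Rightarrow> 'c \<Rightarrow> real"
    and Fl :: "'c \<Rightarrow> 'a::euclidean_space \<Rightarrow> real"
    and gradF :: "'c \<Rightarrow> 'a \<Rightarrow> 'a"
    and g :: "'c \<Rightarrow> 'a \<Rightarrow> 'n \<Rightarrow> 'a"
    and \<xi> :: "'c \<Rightarrow> nat \<Rightarrow> nat \<Rightarrow> 'b \<Rightarrow> 'n"
    and w0 :: 'a
    and \<beta> L \<sigma> Gb f_inf :: real
    and E t :: nat and \<gamma> :: "nat \<Rightarrow> real"
  assumes M: "prob_space M"
    and p_nonneg: "\<And>i n. 0 \<le> p i n"
    and p_sym: "\<And>i n. p i n = p n i"
    and p_diag: "\<And>i. p i i = 0"
    and p_sum: "(\<Sum>i\<in>UNIV. \<Sum>n\<in>UNIV. p i n) = 1"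
    and pw_pos: "\<And>i. 0 < pw p i"
    and beta: "0 < \<beta>" "\<beta> < 1"
    and E_pos: "1 \<le> E"
    and gamma_pos: "\<And>s. 0 < \<gamma> s"
    and L_pos: "0 < L"
    and gamma_t: "\<gamma> t \<le> 1 / L"
    and grad: "\<And>i x. (Fl i has_derivative (\<lambda>h. gradF i x \<bullet> h)) (at x)"
    and smooth: "\<And>i x y. norm (gradF i x - gradF i y) \<le> L * norm (x - y)"
    and lower: "\<And>x. f_inf \<le> (\<Sum>i\<in>UNIV. pw p i * Fl i x)"
    and \<xi>_meas: "\<And>i s k. \<xi> i s k \<in> measurable M N"
    and g_meas: "\<And>i. (\<lambda>(x, y). g i x y) \<in> borel_measurable (borel \<Otimes>\<^sub>M N)"
    and indep: "prob_space.indep_vars M (\<lambda>_. N) (\<lambda>(i, s, k). \<xi> i s k) UNIV"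
    and unbiased: "\<And>i s k. k < E \<Longrightarrow> AE \<omega> in M.
          (\<integral>y. g i (fed_wt p g \<beta> E \<gamma> w0 (\<lambda>i s k. \<xi> i s k \<omega>) s k i) y \<partial>(distr M N (\<xi> i s k)))
            = gradF i (fed_wt p g \<beta> E \<gamma> w0 (\<lambda>i s k. \<xi> i s k \<omega>) s k i)"
    and variance: "\<And>i s k. k < E \<Longrightarrow>
          (\<integral>\<^sup>+\<omega>. ennreal ((norm (g i (fed_wt p g \<beta> E \<gamma> w0 (\<lambda>i s k. \<xi> i s k \<omega>) s k i) (\<xi> i s k \<omega>)
              - gradF i (fed_wt p g \<beta> E \<gamma> w0 (\<lambda>i s k. \<xi> i s k \<omega>) s k i)))\<^sup>2) \<partial>M) \<le> ennreal (\<sigma>\<^sup>2)"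
    and second_moment: "\<And>i s k. k < E \<Longrightarrow>
          (\<integral>\<^sup>+\<omega>. ennreal ((norm (g i (fed_wt p g \<beta> E \<gamma> w0 (\<lambda>i s k. \<xi> i s k \<omega>) s k i) (\<xi> i s k \<omega>)))\<^sup>2) \<partial>M)
            \<le> ennreal (Gb\<^sup>2)"
  shows "(1 / real E) * (\<Sum>k<E. \<integral>\<omega>. (norm (\<Sum>i\<in>UNIV. pw p i *\<^sub>R
              gradF i (fed_wbar p g \<beta> E \<gamma> w0 (\<lambda>i s k. \<xi> i s k \<omega>) t k)))\<^sup>2 \<partial>M)
         \<le> 2 / (\<gamma> t * real E) *
             (\<integral>\<omega>. (\<Sum>i\<in>UNIV. pw p i * Fl i (fed_wbar p g \<beta> E \<gamma> w0 (\<lambda>i s k. \<xi> i s k \<omega>) t 0))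
                  - (\<Sum>i\<in>UNIV. pw p i * Fl i (fed_wbar p g \<beta> E \<gamma> w0 (\<lambda>i s k. \<xi> i s k \<omega>) (Suc t) 0)) \<partial>M)
           + (\<gamma> t * L * \<sigma>\<^sup>2 * (\<Sum>i\<in>UNIV. (pw p i)\<^sup>2)
              + 4 * (\<gamma> t)\<^sup>2 * L\<^sup>2 * (real E)\<^sup>2 * Gb\<^sup>2 *
                (4 + (1 - \<beta>)\<^sup>2 + (if 1 \<le> t then 8 * (\<gamma> (t - 1))\<^sup>2 / (\<gamma> t)\<^sup>2 * (1 - 1 / \<beta>)\<^sup>2 else 0)))"
proof -
  interpret perturbed_fedavg M N p Fl gradF g \<xi> w0 \<beta> L \<sigma> Gb E \<gamma>
    using M p_nonneg p_sum pw_pos beta E_pos gamma_pos L_pos grad smooth \<xi>_meas g_meas indep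
      unbiased variance second_moment
    by (intro perturbed_fedavg.intro perturbed_fedavg_axioms.intro) simp_all
  show ?thesis
    using average_integral_full_grad_le[OF gamma_t] L_sq_drift_bound_le[of t]
    unfolding full_grad_def F_def average_def by (simp add: mult_ac)
qed

end
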